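(* Let $J_1,J_2$ satisfy (J), let $a,b,e>0$, let $G$ satisfy (G1), and let $0<L_1<L_2<+\infty$. For $d_1,d_2>0$ let $\lambda_p(d_1,d_2)$ be the principal eigenvalue defined in the context. Then: (i) $\lambda_p(d_1,d_2)$ is continuous in $(d_1,d_2)$ and strictly increasing in the sense that $\lambda_p(d_1,d_2)>\lambda_p(d_1',d_2')$ whenever $d_i>d_i'$ for $i=1,2$; (ii) $\lim_{(d_1,d_2)\to(0,0)}\lambda_p(d_1,d_2)=\frac12\Big(\frac ae+\frac{b}{G'(0)}-\sqrt{\big(\frac ae-\frac{b}{G'(0)}\big)^2+4}\Big)$; (iii) $\lim_{(d_1,d_2)\to(\infty,\infty)}\lambda_p(d_1,d_2)=+\infty$.
   Context: Condition (J) on $J_i$ ($i=1,2$): $J_i\in C(\mathbb{R})\cap L^\infty(\mathbb{R})$, $J_i(x)=J_i(-x)\ge 0$, $J_i(0)>0$, $\int_{\mathbb{R}}J_i=1$. (G1): $G\in C^1([0,\infty))$, $G(0)=0$, $G'(z)>0$ for $z\ge0$. For $\phi=(\phi_1,\phi_2)$ with $\phi_i\in C([L_1,L_2])$ define $\mathcal K[\phi]=(\mathcal K_1,\mathcal K_2)$ by $\mathcal K_1=\frac{d_1}{e}\int_{L_1}^{L_2}J_1(x-y)\phi_1(y)dy-\frac{d_1}{e}\phi_1-\frac ae\phi_1+\phi_2$ and $\mathcal K_2=\frac{d_2}{G'(0)}\int_{L_1}^{L_2}J_2(x-y)\phi_2(y)dy-\frac{d_2}{G'(0)}\phi_2+\phi_1-\frac{b}{G'(0)}\phi_2$.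 The principal eigenvalue is $\lambda_p(d_1,d_2):=\sup\{\lambda\in\mathbb R:\exists\phi\in C([L_1,L_2])^2$ with $\phi_1,\phi_2>0$ on $[L_1,L_2]$ and $\mathcal K[\phi]+\lambda\phi\le0$ componentwise on $[L_1,L_2]\}$; it also equals $-\sup\{\langle\mathcal K\phi,\phi\rangle_{L^2\times L^2}:\|\phi\|_{L^2\times L^2}=1\}$. *)

theory Defs
  imports "HOL-Analysis.Analysis"
begin

definition kernel_J :: "(real \<Rightarrow> real) \<Rightarrow> bool" where
  "kernel_J J \<longleftrightarrow> continuous_on UNIV J \<and> bounded (range J)
     \<and> (\<forall>x. J x = J (- x) \<and> J x \<ge> 0) \<and> J 0 > 0 \<and> (J has_integral 1) UNIV"

definition cond_G1 :: "(real \<Rightarrow> real) \<Rightarrow> (real \<Rightarrow> real) \<Rightarrow> bool" where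
  "cond_G1 G Gd \<longleftrightarrow> continuous_on {0..} Gd
     \<and> (\<forall>z\<ge>0. (G has_real_derivative Gd z) (at z within {0..}))
     \<and> G 0 = 0 \<and> (\<forall>z\<ge>0. Gd z > 0)"

text \<open>The components of the operator K[phi]; g0 stands for G'(0).\<close>
definition K1op :: "(real \<Rightarrow> real) \<Rightarrow> real \<Rightarrow> real \<Rightarrow> real \<Rightarrow> real \<Rightarrow> real
    \<Rightarrow> (real \<Rightarrow> real) \<Rightarrow> (real \<Rightarrow> real) \<Rightarrow> real \<Rightarrow> real" where
  "K1op J1 a e L1 L2 d1 \<phi>1 \<phi>2 x =
     d1 / e * integral {L1..L2} (\<lambda>y. J1 (x - y) * \<phi>1 y) - d1 / e * \<phi>1 x - a / e * \<phi>1 x + \<phi>2 x"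

definition K2op :: "(real \<Rightarrow> real) \<Rightarrow> real \<Rightarrow> real \<Rightarrow> real \<Rightarrow> real \<Rightarrow> real
    \<Rightarrow> (real \<Rightarrow> real) \<Rightarrow> (real \<Rightarrow> real) \<Rightarrow> real \<Rightarrow> real" where
  "K2op J2 b g0 L1 L2 d2 \<phi>1 \<phi>2 x =
     d2 / g0 * integral {L1..L2} (\<lambda>y. J2 (x - y) * \<phi>2 y) - d2 / g0 * \<phi>2 x + \<phi>1 x - b / g0 * \<phi>2 x"

definition lambda_p :: "(real \<Rightarrow> real) \<Rightarrow> (real \<Rightarrow> real) \<Rightarrow> real \<Rightarrow> real \<Rightarrow> real \<Rightarrow> real
    \<Rightarrow> real \<Rightarrow> real \<Rightarrow> real \<Rightarrow> real \<Rightarrow> real" where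
  "lambda_p J1 J2 a b e g0 L1 L2 d1 d2 = Sup {lam. \<exists>\<phi>1 \<phi>2.
      continuous_on {L1..L2} \<phi>1 \<and> continuous_on {L1..L2} \<phi>2 \<and>
      (\<forall>x\<in>{L1..L2}. \<phi>1 x > 0 \<and> \<phi>2 x > 0
         \<and> K1op J1 a e L1 L2 d1 \<phi>1 \<phi>2 x + lam * \<phi>1 x \<le> 0
         \<and> K2op J2 b g0 L1 L2 d2 \<phi>1 \<phi>2 x + lam * \<phi>2 x \<le> 0)}"

end

theory Submission
  imports Defs
begin

text \<open>
  Write \<open>A\<^sub>i\<phi>(x) = \<integral>\<^sub>L\<^sub>1\<^sup>L\<^sup>2 J\<^sub>i(x - y) \<phi>(y) dy\<close>, \<open>c\<^sub>1 = d\<^sub>1/e\<close>, \<open>c\<^sub>2 = d\<^sub>2/G'(0)\<close>, \<open>\<alpha> = a/e\<close>, \<open>\<beta> = b/G'(0)\<close> and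
  \<open>W\<^sub>1 = c\<^sub>1 + \<alpha> - \<lambda>\<close>, \<open>W\<^sub>2 = c\<^sub>2 + \<beta> - \<lambda>\<close>. Then \<open>\<lambda>\<close> competes for \<open>\<lambda>\<^sub>p\<close> iff there are positive
  continuous \<open>\<phi>\<^sub>1, \<phi>\<^sub>2\<close> with \<open>c\<^sub>1A\<^sub>1\<phi>\<^sub>1 + \<phi>\<^sub>2 \<le> W\<^sub>1\<phi>\<^sub>1\<close> and \<open>c\<^sub>2A\<^sub>2\<phi>\<^sub>2 + \<phi>\<^sub>1 \<le> W\<^sub>2\<phi>\<^sub>2\<close>.

  Since \<open>0 \<le> A\<^sub>i1 \<le> 1\<close>, constant test functions and evaluation at a point give
  \<open>\<lambda>\<^sub>0 \<le> \<lambda>\<^sub>p \<le> \<lambda>\<^sub>0 + max c\<^sub>1 c\<^sub>2\<close>, where \<open>\<lambda>\<^sub>0\<close> is the smaller eigenvalue of the diffusion-free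
  matrix; this is the limit at \<open>(0, 0)\<close>. A supersolution for \<open>(d\<^sub>1', d\<^sub>2')\<close> remains one for
  \<open>(d\<^sub>1, d\<^sub>2)\<close> after lowering \<open>\<lambda>\<close> by a multiple of \<open>|d - d'|\<close>, so \<open>\<lambda>\<^sub>p\<close> is locally Lipschitz.
  Mass leaks out of the bounded interval, so some iterate \<open>A\<^sup>K1\<close> is uniformly below \<open>1\<close>, and
  \<open>g = \<Sum>\<^sub>k\<^sub><\<^sub>K A\<^sup>k1\<close> satisfies \<open>Ag \<le> r g\<close> with \<open>r < 1\<close>; used as test functions these make
  \<open>\<lambda>\<^sub>p\<close> grow linearly in \<open>min c\<^sub>1 c\<^sub>2\<close>.

  Strict monotonicity needs the converse direction. By Picone's inequality every supersolution
  bounds the quadratic form \<open>c\<^sub>1\<langle>A\<^sub>1u\<^sub>1,u\<^sub>1\<rangle> + c\<^sub>2\<langle>A\<^sub>2u\<^sub>2,u\<^sub>2\<rangle> + 2\<langle>u\<^sub>1,u\<^sub>2\<rangle>\<close> by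
  \<open>W\<^sub>1\<parallel>u\<^sub>1\<parallel>\<^sup>2 + W\<^sub>2\<parallel>u\<^sub>2\<parallel>\<^sup>2\<close>; Picone applied to \<open>g\<close> gives \<open>\<langle>Au,u\<rangle> \<le> r\<parallel>u\<parallel>\<^sup>2\<close>, so increasing
  \<open>d\<close> yields such a bound with a uniform margin at a strictly larger \<open>\<lambda>\<close>. Conversely, a bound
  with margin makes \<open>M\<^sup>-\<^sup>1CA\<close> (\<open>M = [[W\<^sub>1, -1], [-1, W\<^sub>2]]\<close>, \<open>C = diag(c\<^sub>1, c\<^sub>2)\<close>) a contraction
  for the energy \<open>\<langle>Mu, u\<rangle>\<close>; the partial sums of its Neumann series applied to \<open>M\<^sup>-\<^sup>1(1, 1)\<close>
  are positive supersolutions.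
\<close>

section \<open>The kernel operator on an interval\<close>

lemma square_integral_le:
  fixes f :: "real \<Rightarrow> real"
  assumes f: "continuous_on {a..b} f" and "a < b"
  shows "(integral {a..b} f)\<^sup>2 \<le> (b - a) * integral {a..b} (\<lambda>x. (f x)\<^sup>2)"
proof -
  define I where "I = integral {a..b} f"
  define m where "m = I / (b - a)"
  have mI: "m * (b - a) = I"
    using \<open>a < b\<close> by (simp add: m_def)
  have int: "(\<lambda>x. (f x)\<^sup>2) integrable_on {a..b}" "(\<lambda>x. 2 * m * f x) integrable_on {a..b}"
    using f by (auto intro!: integrable_continuous_real continuous_intros)
  have "0 \<le> integral {a..b} (\<lambda>x. (f x - m)\<^sup>2)"
    using f by (intro integral_nonneg integrable_continuous_real continuous_intros) auto
  also have "integral {a..b} (\<lambda>x. (f x - m)\<^sup>2)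
      = integral {a..b} (\<lambda>x. (f x)\<^sup>2 - 2 * m * f x + m\<^sup>2)"
    by (simp add: power2_eq_square algebra_simps)
  also have "\<dots> = integral {a..b} (\<lambda>x. (f x)\<^sup>2) - 2 * m * I + m * (m * (b - a))"
    using integral_add[OF integrable_diff[OF int] integrable_const_ivl] integral_diff[OF int] \<open>a < b\<close>
    by (simp add: I_def power2_eq_square)
  finally have "m * I \<le> integral {a..b} (\<lambda>x. (f x)\<^sup>2)"
    unfolding mI by (simp add: mult.commute)
  then have "(b - a) * (m * I) \<le> (b - a) * integral {a..b} (\<lambda>x. (f x)\<^sup>2)"
    using \<open>a < b\<close> by (intro mult_left_mono) auto
  moreover have "(b - a) * (m * I) = I\<^sup>2"
    by (metis mI mult.assoc mult.commute power2_eq_square)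
  ultimately show ?thesis
    by (simp add: I_def)
qed

lemma two_mult_le_weighted_squares:
  fixes a b p q :: real
  assumes "p > 0" and "q > 0"
  shows "2 * (a * b) \<le> a\<^sup>2 * q / p + b\<^sup>2 * p / q"
proof -
  have "0 \<le> (a * q - b * p)\<^sup>2 / (p * q)"
    using assms by simp
  also have "\<dots> = a\<^sup>2 * q / p + b\<^sup>2 * p / q - 2 * (a * b)"
    using assms by (simp add: field_simps power2_eq_square)
  finally show ?thesis
    by simp
qed

lemma integral_ge_const:
  fixes f :: "real \<Rightarrow> real"
  assumes "a \<le> b" and "continuous_on {a..b} f" and "\<And>y. y \<in> {a..b} \<Longrightarrow> c \<le> f y"
  shows "(b - a) * c \<le> integral {a..b} f"
  using integral_le[of "\<lambda>_. c" "{a..b}" f] assms by (simp add: integrable_continuous_real)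

definition kernel_op :: "(real \<Rightarrow> real) \<Rightarrow> real \<Rightarrow> real \<Rightarrow> (real \<Rightarrow> real) \<Rightarrow> real \<Rightarrow> real" where
  "kernel_op J L1 L2 \<phi> x = integral {L1..L2} (\<lambda>y. J (x - y) * \<phi> y)"

locale interval_kernel =
  fixes J :: "real \<Rightarrow> real" and L1 L2 :: real
  assumes kernel: "kernel_J J" and interval: "L1 < L2"
begin

abbreviation A :: "(real \<Rightarrow> real) \<Rightarrow> real \<Rightarrow> real" where
  "A \<equiv> kernel_op J L1 L2"

lemma J_nonneg: "J x \<ge> 0"
  using kernel unfolding kernel_J_def by auto

lemma J_even: "J (- x) = J x"
  using kernel unfolding kernel_J_def by metis

lemma J_0_pos: "J 0 > 0"
  using kernel unfolding kernel_J_def by auto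

lemma continuous_on_J_comp [continuous_intros]:
  "continuous_on S f \<Longrightarrow> continuous_on S (\<lambda>x. J (f x))"
  using kernel continuous_on_compose2[of UNIV J] unfolding kernel_J_def by auto

lemma J_bounded:
  obtains B where "\<And>x. J x \<le> B"
proof -
  have "bounded (range J)"
    using kernel unfolding kernel_J_def by auto
  then obtain B where "\<And>x. \<bar>J x\<bar> \<le> B"
    unfolding bounded_real by auto
  then show ?thesis
    using that abs_le_D1 by metis
qed

lemma J_ge_near_0:
  obtains \<eta> \<delta> where "\<eta> > 0" "\<delta> > 0" "\<And>t. \<bar>t\<bar> \<le> \<delta> \<Longrightarrow> \<eta> \<le> J t"
proof -
  have "isCont J 0"
    using kernel unfolding kernel_J_def by (simp add: continuous_on_eq_continuous_at)
  then obtain \<delta> where "\<delta> > 0" and \<delta>: "\<And>t. \<bar>t\<bar> < \<delta> \<Longrightarrow> \<bar>J t - J 0\<bar> < J 0 / 2"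
    using J_0_pos unfolding continuous_at_eps_delta dist_real_def
    by (metis diff_zero half_gt_zero)
  show ?thesis
  proof (rule that[of "J 0 / 2" "\<delta> / 2"])
    show "J 0 / 2 \<le> J t" if "\<bar>t\<bar> \<le> \<delta> / 2" for t
      using \<delta>[of t] that \<open>\<delta> > 0\<close> by linarith
  qed (use J_0_pos \<open>\<delta> > 0\<close> in auto)
qed

lemma integral_J_shift_le_1:
  assumes "a \<le> b"
  shows "integral {a..b} (\<lambda>y. J (x - y)) \<le> 1"
proof -
  have J_int: "(J has_integral 1) UNIV" and J_cont: "continuous_on UNIV J"
    using kernel unfolding kernel_J_def by auto
  have "(\<lambda>y. J (x - y)) = J \<circ> (+) (- x)"
    by (rule ext) (metis J_even comp_apply minus_diff_eq uminus_add_conv_diff)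
  then have "integral {a..b} (\<lambda>y. J (x - y)) = integral {a + - x..b + - x} J"
    by (simp only: integral_shift_Icc_real)
  also have "\<dots> \<le> integral UNIV J"
    using J_int J_nonneg
    by (intro integral_subset_le) (auto intro: integrable_continuous_interval continuous_on_subset[OF J_cont])
  also have "\<dots> = 1"
    using J_int by (rule integral_unique)
  finally show ?thesis .
qed

lemma kernel_integrable:
  "continuous_on {L1..L2} \<phi> \<Longrightarrow> (\<lambda>y. J (x - y) * \<phi> y) integrable_on {L1..L2}"
  by (intro integrable_continuous_interval continuous_intros)

lemma continuous_on_kernel_op:
  assumes "continuous_on {L1..L2} \<phi>"
  shows "continuous_on S (A \<phi>)"
proof -
  have "continuous_on (UNIV \<times> cbox L1 L2) (\<lambda>(x, y). J (x - y) * \<phi> y)"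
    unfolding split_beta
    by (intro continuous_intros continuous_on_compose2[OF assms]) auto
  from integral_continuous_on_param[OF this] show ?thesis
    unfolding kernel_op_def by (auto intro: continuous_on_subset)
qed

lemma continuous_on_kernel_op_comp [continuous_intros]:
  "continuous_on {L1..L2} \<phi> \<Longrightarrow> continuous_on S f \<Longrightarrow> continuous_on S (\<lambda>x. A \<phi> (f x))"
  using continuous_on_compose2[OF continuous_on_kernel_op] by blast

lemma kernel_op_nonneg:
  assumes "continuous_on {L1..L2} \<phi>" and "\<And>y. y \<in> {L1..L2} \<Longrightarrow> 0 \<le> \<phi> y"
  shows "0 \<le> A \<phi> x"
  unfolding kernel_op_def using assms J_nonneg by (intro integral_nonneg kernel_integrable) auto

lemma kernel_op_mono:
  assumes "continuous_on {L1..L2} \<phi>" "continuous_on {L1..L2} \<psi>"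
    and "\<And>y. y \<in> {L1..L2} \<Longrightarrow> \<phi> y \<le> \<psi> y"
  shows "A \<phi> x \<le> A \<psi> x"
  unfolding kernel_op_def using assms J_nonneg
  by (intro integral_le kernel_integrable) (auto intro: mult_left_mono)

lemma kernel_op_add:
  assumes "continuous_on {L1..L2} \<phi>" "continuous_on {L1..L2} \<psi>"
  shows "A (\<lambda>y. \<phi> y + \<psi> y) x = A \<phi> x + A \<psi> x"
  unfolding kernel_op_def distrib_left
  using assms by (intro integral_add kernel_integrable)

lemma kernel_op_diff:
  assumes "continuous_on {L1..L2} \<phi>" "continuous_on {L1..L2} \<psi>"
  shows "A (\<lambda>y. \<phi> y - \<psi> y) x = A \<phi> x - A \<psi> x"
  unfolding kernel_op_def right_diff_distrib
  using assms by (intro integral_diff kernel_integrable)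

lemma kernel_op_cmult: "A (\<lambda>y. c * \<phi> y) x = c * A \<phi> x"
  unfolding kernel_op_def by (simp add: mult.left_commute)

lemma kernel_op_sum:
  fixes n :: nat
  assumes "\<And>k. continuous_on {L1..L2} (f k)"
  shows "A (\<lambda>y. \<Sum>k<n. f k y) x = (\<Sum>k<n. A (f k) x)"
proof (induction n)
  case 0
  then show ?case by (simp add: kernel_op_def)
next
  case (Suc n)
  then show ?case
    using assms by (simp add: kernel_op_add continuous_on_sum)
qed

lemma kernel_op_one_le: "A (\<lambda>_. 1) x \<le> 1"
  unfolding kernel_op_def using integral_J_shift_le_1[of L1 L2 x] interval by simp

lemma kernel_op_abs_le:
  assumes "continuous_on {L1..L2} u"
  shows "\<bar>A u x\<bar> \<le> A (\<lambda>y. \<bar>u y\<bar>) x"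
proof -
  have "A u x \<le> A (\<lambda>y. \<bar>u y\<bar>) x"
    by (rule kernel_op_mono) (use assms in \<open>auto intro: continuous_intros\<close>)
  moreover have "A (\<lambda>y. - 1 * u y) x \<le> A (\<lambda>y. \<bar>u y\<bar>) x"
    by (rule kernel_op_mono) (use assms in \<open>auto intro: continuous_intros\<close>)
  ultimately show ?thesis
    unfolding kernel_op_cmult by linarith
qed

lemma kernel_op_square_le:
  obtains C where "0 \<le> C"
    and "\<And>u x. continuous_on {L1..L2} u \<Longrightarrow> (A u x)\<^sup>2 \<le> C * integral {L1..L2} (\<lambda>y. (u y)\<^sup>2)"
proof -
  obtain B where B: "\<And>x. J x \<le> B"
    using J_bounded by blast
  have "B \<ge> 0"
    using B[of 0] J_nonneg[of 0] by linarith
  have "(A u x)\<^sup>2 \<le> B\<^sup>2 * (L2 - L1) * integral {L1..L2} (\<lambda>y. (u y)\<^sup>2)"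
    if u: "continuous_on {L1..L2} u" for u x
  proof -
    have "norm (A u x) \<le> integral {L1..L2} (\<lambda>y. B * \<bar>u y\<bar>)"
      unfolding kernel_op_def
    proof (rule integral_norm_bound_integral)
      show "norm (J (x - y) * u y) \<le> B * \<bar>u y\<bar>" for y
        using B[of "x - y"] J_nonneg[of "x - y"] by (simp add: abs_mult mult_right_mono)
    qed (use u in \<open>auto intro!: kernel_integrable integrable_continuous_real continuous_intros\<close>)
    then have "\<bar>A u x\<bar>\<^sup>2 \<le> (B * integral {L1..L2} (\<lambda>y. \<bar>u y\<bar>))\<^sup>2"
      by (intro power_mono) auto
    also have "\<dots> \<le> B\<^sup>2 * ((L2 - L1) * integral {L1..L2} (\<lambda>y. \<bar>u y\<bar>\<^sup>2))"
      unfolding power_mult_distrib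
      using u interval by (intro mult_left_mono square_integral_le continuous_intros) auto
    finally show ?thesis
      by simp
  qed
  then show ?thesis
    using that[of "B\<^sup>2 * (L2 - L1)"] interval by simp
qed

lemma J_diff_commute: "J (x - y) = J (y - x)"
  using J_even[of "y - x"] by simp

lemma kernel_op_symmetric:
  assumes u: "continuous_on {L1..L2} u" and v: "continuous_on {L1..L2} v"
  shows "integral {L1..L2} (\<lambda>x. u x * A v x) = integral {L1..L2} (\<lambda>x. v x * A u x)"
proof -
  have "continuous_on (cbox (L1, L1) (L2, L2)) (\<lambda>(x, y). u x * J (x - y) * v y)"
    unfolding cbox_Pair_eq split_beta
    by (intro continuous_intros continuous_on_compose2[OF u] continuous_on_compose2[OF v]) auto
  from integral_swap_continuous[OF this]
  have "integral {L1..L2} (\<lambda>x. integral {L1..L2} (\<lambda>y. u x * J (x - y) * v y))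
      = integral {L1..L2} (\<lambda>y. integral {L1..L2} (\<lambda>x. u x * J (x - y) * v y))"
    by (simp only: cbox_interval)
  also have "\<dots> = integral {L1..L2} (\<lambda>y. v y * integral {L1..L2} (\<lambda>x. J (y - x) * u x))"
    by (intro integral_cong) (simp add: J_diff_commute mult_ac flip: integral_mult_right)
  finally show ?thesis
    unfolding kernel_op_def by (simp add: mult.assoc)
qed

lemma picone_pointwise:
  assumes \<phi>: "continuous_on {L1..L2} \<phi>" "\<And>y. y \<in> {L1..L2} \<Longrightarrow> \<phi> y > 0"
    and \<psi>: "continuous_on {L1..L2} \<psi>" and x: "x \<in> {L1..L2}"
  shows "\<psi> x * A \<psi> x \<le> ((\<psi> x)\<^sup>2 / \<phi> x * A \<phi> x + \<phi> x * A (\<lambda>y. (\<psi> y)\<^sup>2 / \<phi> y) x) / 2"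
proof -
  define q where "q = (\<lambda>y. (\<psi> y)\<^sup>2 / \<phi> y)"
  have q: "continuous_on {L1..L2} q"
    unfolding q_def using \<phi> \<psi> by (intro continuous_intros) force+
  have "\<psi> x * A \<psi> x = A (\<lambda>y. \<psi> x * \<psi> y) x"
    by (simp add: kernel_op_cmult)
  also have "\<dots> \<le> A (\<lambda>y. (q x / 2) * \<phi> y + (\<phi> x / 2) * q y) x"
  proof (rule kernel_op_mono)
    fix y assume y: "y \<in> {L1..L2}"
    have "2 * (q x / 2 * \<phi> y + \<phi> x / 2 * q y)
        = (\<psi> x)\<^sup>2 * \<phi> y / \<phi> x + (\<psi> y)\<^sup>2 * \<phi> x / \<phi> y"
      using \<phi>(2) x y by (simp add: q_def field_simps)
    also have "\<dots> \<ge> 2 * (\<psi> x * \<psi> y)"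
      using \<phi>(2) x y by (intro two_mult_le_weighted_squares)
    finally show "\<psi> x * \<psi> y \<le> q x / 2 * \<phi> y + \<phi> x / 2 * q y"
      by simp
  qed (use \<psi> \<phi> q in \<open>auto intro!: continuous_intros\<close>)
  also have "\<dots> = q x / 2 * A \<phi> x + \<phi> x / 2 * A q x"
  proof -
    have "continuous_on {L1..L2} (\<lambda>y. q x / 2 * \<phi> y)" "continuous_on {L1..L2} (\<lambda>y. \<phi> x / 2 * q y)"
      by (intro continuous_intros \<phi>(1) q)+
    then show ?thesis
      by (simp only: kernel_op_add kernel_op_cmult)
  qed
  finally show ?thesis
    by (simp add: q_def)
qed

lemma picone_inequality:
  assumes \<phi>: "continuous_on {L1..L2} \<phi>" "\<And>x. x \<in> {L1..L2} \<Longrightarrow> \<phi> x > 0"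
    and \<psi>: "continuous_on {L1..L2} \<psi>"
  shows "integral {L1..L2} (\<lambda>x. \<psi> x * A \<psi> x)
    \<le> integral {L1..L2} (\<lambda>x. (\<psi> x)\<^sup>2 / \<phi> x * A \<phi> x)"
proof -
  define q where "q = (\<lambda>y. (\<psi> y)\<^sup>2 / \<phi> y)"
  have q: "continuous_on {L1..L2} q"
    unfolding q_def using \<phi> \<psi> by (intro continuous_intros) force+
  have int: "(\<lambda>x. q x * A \<phi> x) integrable_on {L1..L2}" "(\<lambda>x. \<phi> x * A q x) integrable_on {L1..L2}"
    using \<phi> q by (auto intro!: integrable_continuous_real continuous_intros)
  have "integral {L1..L2} (\<lambda>x. \<psi> x * A \<psi> x)
      \<le> integral {L1..L2} (\<lambda>x. (q x * A \<phi> x + \<phi> x * A q x) / 2)"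
  proof (rule integral_le)
    show "\<psi> x * A \<psi> x \<le> (q x * A \<phi> x + \<phi> x * A q x) / 2" if "x \<in> {L1..L2}" for x
      using picone_pointwise[OF \<phi> \<psi> that] by (simp add: q_def)
  qed (use \<psi> \<phi>(1) q in \<open>auto intro!: integrable_continuous_real continuous_intros\<close>)
  also have "\<dots> = (integral {L1..L2} (\<lambda>x. q x * A \<phi> x) + integral {L1..L2} (\<lambda>x. \<phi> x * A q x)) / 2"
    using integral_add[OF int] by simp
  also have "integral {L1..L2} (\<lambda>x. \<phi> x * A q x) = integral {L1..L2} (\<lambda>x. q x * A \<phi> x)"
    using \<phi>(1) q by (rule kernel_op_symmetric)
  finally show ?thesis
    by (simp add: q_def)
qed

lemma continuous_on_kernel_iterate: "continuous_on {L1..L2} ((A ^^ k) (\<lambda>_. 1))"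
  by (induction k) (auto intro: continuous_on_kernel_op)

lemma kernel_iterate_bounds: "0 \<le> (A ^^ k) (\<lambda>_. 1) x \<and> (A ^^ k) (\<lambda>_. 1) x \<le> 1"
proof (induction k arbitrary: x)
  case (Suc k)
  have "A ((A ^^ k) (\<lambda>_. 1)) x \<le> A (\<lambda>_. 1) x"
    using Suc continuous_on_kernel_iterate by (intro kernel_op_mono) auto
  then show ?case
    using kernel_op_one_le[of x] Suc continuous_on_kernel_iterate by (auto intro: kernel_op_nonneg)
qed simp

lemma kernel_op_one_deficit:
  assumes "s \<ge> 0" and "\<And>y. y \<in> {L2..L2 + s} \<Longrightarrow> \<eta> \<le> J (x - y)"
  shows "A (\<lambda>_. 1) x \<le> 1 - s * \<eta>"
proof -
  have cont: "continuous_on S (\<lambda>y. J (x - y))" for S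
    by (intro continuous_intros)
  have "integral {L1..L2} (\<lambda>y. J (x - y)) + integral {L2..L2 + s} (\<lambda>y. J (x - y))
      = integral {L1..L2 + s} (\<lambda>y. J (x - y))"
    using interval assms(1)
    by (intro Henstock_Kurzweil_Integration.integral_combine integrable_continuous_real cont) auto
  also have "\<dots> \<le> 1"
    using interval assms(1) by (intro integral_J_shift_le_1) auto
  finally show ?thesis
    using integral_ge_const[of L2 "L2 + s" "\<lambda>y. J (x - y)" \<eta>] assms cont
    by (simp add: kernel_op_def mult.commute)
qed

lemma kernel_op_deficit:
  assumes \<phi>: "continuous_on {L1..L2} \<phi>" "\<And>y. y \<in> {L1..L2} \<Longrightarrow> 0 \<le> \<phi> y \<and> \<phi> y \<le> 1"
    and c: "{c..c + s} \<subseteq> {L1..L2}" "s \<ge> 0"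
    and deficit: "\<And>y. y \<in> {c..c + s} \<Longrightarrow> \<phi> y \<le> 1 - \<epsilon> \<and> \<eta> \<le> J (x - y)"
    and "\<epsilon> \<ge> 0" "\<eta> \<ge> 0"
  shows "A \<phi> x \<le> 1 - s * (\<eta> * \<epsilon>)"
proof -
  have cont: "continuous_on S (\<lambda>y. J (x - y) * (1 - \<phi> y))" if "S \<subseteq> {L1..L2}" for S
    using continuous_on_subset[OF \<phi>(1) that] by (intro continuous_intros)
  have "\<eta> * \<epsilon> \<le> J (x - y) * (1 - \<phi> y)" if "y \<in> {c..c + s}" for y
    using deficit[OF that] \<open>\<epsilon> \<ge> 0\<close> \<open>\<eta> \<ge> 0\<close> by (intro mult_mono) auto
  then have "(c + s - c) * (\<eta> * \<epsilon>) \<le> integral {c..c + s} (\<lambda>y. J (x - y) * (1 - \<phi> y))"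
    using c cont by (intro integral_ge_const) auto
  then have "s * (\<eta> * \<epsilon>) \<le> integral {c..c + s} (\<lambda>y. J (x - y) * (1 - \<phi> y))"
    by simp
  also have "\<dots> \<le> integral {L1..L2} (\<lambda>y. J (x - y) * (1 - \<phi> y))"
    using c \<phi>(2) J_nonneg
    by (intro integral_subset_le integrable_continuous_real cont) auto
  also have "\<dots> = A (\<lambda>_. 1) x - A \<phi> x"
    using kernel_op_diff[of "\<lambda>_. 1" \<phi> x] \<phi>(1) by (simp add: kernel_op_def)
  finally show ?thesis
    using kernel_op_one_le[of x] by linarith
qed

text \<open>Mass escapes through the right end of the interval: near \<open>L2\<close> already \<open>A 1 < 1\<close>, and
  each further application of \<open>A\<close> spreads the deficit a distance \<open>s\<close> to the left.\<close>

lemma kernel_iterate_deficit_step: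
  fixes k :: nat and s :: real
  assumes \<eta>: "0 \<le> \<eta>" "\<And>t. \<bar>t\<bar> \<le> 2 * s \<Longrightarrow> \<eta> \<le> J t"
    and s: "0 < s" "1 \<le> k" "Suc k * s \<le> L2 - L1"
    and \<epsilon>: "0 \<le> \<epsilon>" "\<And>y. y \<in> {L1..L2} \<Longrightarrow> L2 - k * s \<le> y \<Longrightarrow> (A ^^ k) (\<lambda>_. 1) y \<le> 1 - \<epsilon>"
    and x: "x \<in> {L1..L2}" "L2 - Suc k * s \<le> x"
  shows "(A ^^ Suc k) (\<lambda>_. 1) x \<le> 1 - s * (\<eta> * \<epsilon>)"
proof -
  define c where "c = max (L2 - k * s) (x - s)"
  have "s \<le> k * s" "L1 + s \<le> L2 - k * s" "L2 - k * s - s \<le> x"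
    using s x(2) mult_right_mono[of 1 "real k" s] by (auto simp: algebra_simps)
  then have c: "L1 + s \<le> c" "L2 - k * s \<le> c" "x - s \<le> c" "c \<le> L2 - s" "c \<le> x + s"
    unfolding c_def max.bounded_iff using x(1) s by auto
  have "A ((A ^^ k) (\<lambda>_. 1)) x \<le> 1 - s * (\<eta> * \<epsilon>)"
  proof (rule kernel_op_deficit)
    show "{c..c + s} \<subseteq> {L1..L2}"
      using c by auto
    show "(A ^^ k) (\<lambda>_. 1) y \<le> 1 - \<epsilon> \<and> \<eta> \<le> J (x - y)" if "y \<in> {c..c + s}" for y
      using that c s by (auto intro!: \<epsilon>(2) \<eta>(2))
  qed (use continuous_on_kernel_iterate kernel_iterate_bounds s \<eta> \<epsilon> in auto)
  then show ?thesis
    by simp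
qed

lemma kernel_iterate_deficit_near_right_end:
  fixes k :: nat and s :: real
  assumes \<eta>: "\<eta> > 0" "\<And>t. \<bar>t\<bar> \<le> 2 * s \<Longrightarrow> \<eta> \<le> J t"
    and s: "s > 0" and k: "1 \<le> k" "k * s \<le> L2 - L1"
  obtains \<epsilon> where "\<epsilon> > 0" and "\<And>x. x \<in> {L1..L2} \<Longrightarrow> L2 - k * s \<le> x \<Longrightarrow> (A ^^ k) (\<lambda>_. 1) x \<le> 1 - \<epsilon>"
  using k
proof (induction k arbitrary: thesis rule: nat_induct_at_least)
  case base
  have "A (\<lambda>_. 1) x \<le> 1 - s * \<eta>" if "x \<in> {L1..L2}" "L2 - s \<le> x" for x
    using that s by (intro kernel_op_one_deficit \<eta>(2)) auto
  then show ?case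
    using base(1)[of "s * \<eta>"] s \<eta> by simp
next
  case (Suc k)
  have "k * s \<le> L2 - L1"
    using Suc.prems(2) s by (simp add: algebra_simps)
  then obtain \<epsilon> where "\<epsilon> > 0"
    and \<epsilon>: "\<And>y. y \<in> {L1..L2} \<Longrightarrow> L2 - k * s \<le> y \<Longrightarrow> (A ^^ k) (\<lambda>_. 1) y \<le> 1 - \<epsilon>"
    using Suc.IH by blast
  have "(A ^^ Suc k) (\<lambda>_. 1) x \<le> 1 - s * (\<eta> * \<epsilon>)" if "x \<in> {L1..L2}" "L2 - Suc k * s \<le> x" for x
    using \<eta> s Suc.hyps Suc.prems(2) \<open>\<epsilon> > 0\<close> \<epsilon> that by (intro kernel_iterate_deficit_step) auto
  then show ?case
    using Suc.prems(1)[of "s * (\<eta> * \<epsilon>)"] s \<eta> \<open>\<epsilon> > 0\<close> by simp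
qed

lemma kernel_iterate_deficit:
  obtains K \<epsilon> where "K \<ge> 1" "\<epsilon> > 0" and "\<And>x. x \<in> {L1..L2} \<Longrightarrow> (A ^^ K) (\<lambda>_. 1) x \<le> 1 - \<epsilon>"
proof -
  obtain \<eta> \<delta> where \<eta>: "\<eta> > 0" "\<delta> > 0" "\<And>t. \<bar>t\<bar> \<le> \<delta> \<Longrightarrow> \<eta> \<le> J t"
    by (rule J_ge_near_0) blast
  obtain K :: nat where K: "2 * (L2 - L1) / \<delta> < K"
    using reals_Archimedean2 by blast
  moreover have "0 < 2 * (L2 - L1) / \<delta>"
    using interval \<eta>(2) by simp
  ultimately have "K \<ge> 1"
    by simp
  define s where "s = (L2 - L1) / K"
  have s: "s > 0" "K * s = L2 - L1" "2 * s \<le> \<delta>"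
    using \<open>K \<ge> 1\<close> interval K \<eta>(2) by (auto simp: s_def field_simps)
  obtain \<epsilon> where "\<epsilon> > 0" "\<And>x. x \<in> {L1..L2} \<Longrightarrow> L2 - K * s \<le> x \<Longrightarrow> (A ^^ K) (\<lambda>_. 1) x \<le> 1 - \<epsilon>"
    by (rule kernel_iterate_deficit_near_right_end[of \<eta> s K])
      (use \<eta> s \<open>K \<ge> 1\<close> in \<open>auto intro!: \<eta>(3)\<close>)
  then show ?thesis
    using that \<open>K \<ge> 1\<close> s by auto
qed

lemma strict_subeigenfunction:
  obtains g r M where "continuous_on {L1..L2} g" "r < 1"
    and "\<And>x. x \<in> {L1..L2} \<Longrightarrow> 1 \<le> g x \<and> g x \<le> M \<and> A g x \<le> r * g x"
proof -
  obtain K \<epsilon> where "K \<ge> 1" "\<epsilon> > 0" and \<epsilon>: "\<And>x. x \<in> {L1..L2} \<Longrightarrow> (A ^^ K) (\<lambda>_. 1) x \<le> 1 - \<epsilon>"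
    by (rule kernel_iterate_deficit) blast
  define g where "g y = (\<Sum>k<K. (A ^^ k) (\<lambda>_. 1) y)" for y
  have g_cont: "continuous_on {L1..L2} g"
    unfolding g_def using continuous_on_kernel_iterate by (intro continuous_on_sum) auto
  obtain m where m: "K = Suc m"
    using \<open>K \<ge> 1\<close> by (cases K) auto
  have g_split: "g y = 1 + (\<Sum>k<m. (A ^^ Suc k) (\<lambda>_. 1) y)" for y
    unfolding g_def m sum.lessThan_Suc_shift by simp
  have g_bounds: "1 \<le> g y \<and> g y \<le> K" for y
  proof -
    have "0 \<le> (\<Sum>k<m. (A ^^ Suc k) (\<lambda>_. 1) y)"
      by (rule sum_nonneg) (use kernel_iterate_bounds in blast)
    moreover have "(\<Sum>k<m. (A ^^ Suc k) (\<lambda>_. 1) y) \<le> (\<Sum>k<m. 1)"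
      by (rule sum_mono) (use kernel_iterate_bounds in blast)
    ultimately show ?thesis
      unfolding g_split m by simp
  qed
  have "A g x = (\<Sum>k<K. (A ^^ Suc k) (\<lambda>_. 1) x)" for x
    unfolding g_def using continuous_on_kernel_iterate by (simp add: kernel_op_sum)
  also have "(\<Sum>k<K. (A ^^ Suc k) (\<lambda>_. 1) x)
      = (\<Sum>k<m. (A ^^ Suc k) (\<lambda>_. 1) x) + (A ^^ K) (\<lambda>_. 1) x" for x
    unfolding m by (simp only: sum.lessThan_Suc)
  finally have Ag: "A g x = g x - 1 + (A ^^ K) (\<lambda>_. 1) x" for x
    using g_split[of x] by simp
  show ?thesis
  proof (rule that[of g "1 - \<epsilon> / K" K])
    fix x assume x: "x \<in> {L1..L2}"
    have "A g x \<le> g x - \<epsilon>"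
      using Ag \<epsilon>[OF x] by simp
    also have "\<dots> \<le> (1 - \<epsilon> / K) * g x"
      using g_bounds[of x] \<open>\<epsilon> > 0\<close> \<open>K \<ge> 1\<close> by (simp add: field_simps mult_left_mono)
    finally show "1 \<le> g x \<and> g x \<le> K \<and> A g x \<le> (1 - \<epsilon> / K) * g x"
      using g_bounds by simp
  qed (use g_cont \<open>\<epsilon> > 0\<close> \<open>K \<ge> 1\<close> in auto)
qed

lemma kernel_form_le:
  obtains r where "r < 1"
    and "\<And>\<psi>. continuous_on {L1..L2} \<psi> \<Longrightarrow>
      integral {L1..L2} (\<lambda>x. \<psi> x * A \<psi> x) \<le> r * integral {L1..L2} (\<lambda>x. (\<psi> x)\<^sup>2)"
proof -
  obtain g r M where g: "continuous_on {L1..L2} g" "r < 1"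
    "\<And>x. x \<in> {L1..L2} \<Longrightarrow> 1 \<le> g x \<and> g x \<le> M \<and> A g x \<le> r * g x"
    by (rule strict_subeigenfunction) blast
  show ?thesis
  proof (rule that[OF g(2)])
    fix \<psi> :: "real \<Rightarrow> real"
    assume \<psi>: "continuous_on {L1..L2} \<psi>"
    have "integral {L1..L2} (\<lambda>x. \<psi> x * A \<psi> x) \<le> integral {L1..L2} (\<lambda>x. (\<psi> x)\<^sup>2 / g x * A g x)"
      using g by (intro picone_inequality \<psi>) force+
    also have "\<dots> \<le> integral {L1..L2} (\<lambda>x. r * (\<psi> x)\<^sup>2)"
    proof (rule integral_le)
      fix x assume x: "x \<in> {L1..L2}"
      have "(\<psi> x)\<^sup>2 / g x * A g x \<le> (\<psi> x)\<^sup>2 / g x * (r * g x)"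
        using g(3)[OF x] by (intro mult_left_mono) auto
      also have "\<dots> = r * (\<psi> x)\<^sup>2"
        using g(3)[OF x] by simp
      finally show "(\<psi> x)\<^sup>2 / g x * A g x \<le> r * (\<psi> x)\<^sup>2" .
    qed (use \<psi> g in \<open>auto intro!: integrable_continuous_real continuous_intros dest: g(3)\<close>)
    finally show "integral {L1..L2} (\<lambda>x. \<psi> x * A \<psi> x) \<le> r * integral {L1..L2} (\<lambda>x. (\<psi> x)\<^sup>2)"
      by simp
  qed
qed

lemma kernel_form_expand:
  assumes u: "continuous_on {L1..L2} u" and w: "continuous_on {L1..L2} w"
  shows "integral {L1..L2} (\<lambda>x. (u x + t * w x) * A (\<lambda>y. u y + t * w y) x)
    = integral {L1..L2} (\<lambda>x. u x * A u x) + 2 * t * integral {L1..L2} (\<lambda>x. w x * A u x)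
      + t\<^sup>2 * integral {L1..L2} (\<lambda>x. w x * A w x)"
proof -
  have "A (\<lambda>y. u y + t * w y) x = A u x + t * A w x" for x
    using u w by (subst kernel_op_add) (auto intro: continuous_intros simp: kernel_op_cmult)
  then have "integral {L1..L2} (\<lambda>x. (u x + t * w x) * A (\<lambda>y. u y + t * w y) x)
    = integral {L1..L2} (\<lambda>x. u x * A u x + (t * (u x * A w x) + t * (w x * A u x))
        + t\<^sup>2 * (w x * A w x))"
    by (simp add: algebra_simps power2_eq_square)
  also have "\<dots> = integral {L1..L2} (\<lambda>x. u x * A u x)
      + (t * integral {L1..L2} (\<lambda>x. u x * A w x) + t * integral {L1..L2} (\<lambda>x. w x * A u x))
      + t\<^sup>2 * integral {L1..L2} (\<lambda>x. w x * A w x)"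
  proof -
    have int: "(\<lambda>x. u x * A u x) integrable_on {L1..L2}" "(\<lambda>x. t * (u x * A w x)) integrable_on {L1..L2}"
      "(\<lambda>x. t * (w x * A u x)) integrable_on {L1..L2}" "(\<lambda>x. t\<^sup>2 * (w x * A w x)) integrable_on {L1..L2}"
      using u w by (auto intro!: integrable_continuous_real continuous_intros)
    show ?thesis
      using int by (simp add: integral_add integrable_add)
  qed
  finally show ?thesis
    using kernel_op_symmetric[OF u w] by (simp add: algebra_simps)
qed

lemma kernel_form_abs_le:
  assumes "continuous_on {L1..L2} u"
  shows "\<bar>integral {L1..L2} (\<lambda>x. u x * A u x)\<bar> \<le> integral {L1..L2} (\<lambda>x. \<bar>u x\<bar> * A (\<lambda>y. \<bar>u y\<bar>) x)"
proof -
  have "norm (integral {L1..L2} (\<lambda>x. u x * A u x))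
      \<le> integral {L1..L2} (\<lambda>x. \<bar>u x\<bar> * A (\<lambda>y. \<bar>u y\<bar>) x)"
  proof (rule integral_norm_bound_integral)
    show "norm (u x * A u x) \<le> \<bar>u x\<bar> * A (\<lambda>y. \<bar>u y\<bar>) x" for x
      using kernel_op_abs_le[OF assms, of x] by (simp add: abs_mult mult_left_mono)
  qed (use assms in \<open>auto intro!: integrable_continuous_real continuous_intros\<close>)
  then show ?thesis
    by simp
qed

end

section \<open>Positive supersolutions from a coercive quadratic form\<close>

lemma weighted_supersolution_sum_le:
  fixes c1 c2 W1 W2 p1 p2 q1 q2 s1 s2 :: real
  assumes "0 < p1" "0 < p2" "0 \<le> s1" "0 \<le> s2"
    and "c1 * q1 + p2 \<le> W1 * p1" "c2 * q2 + p1 \<le> W2 * p2"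
  shows "c1 * (s1 / p1 * q1) + c2 * (s2 / p2 * q2) + (s1 * p2 / p1 + s2 * p1 / p2) \<le> W1 * s1 + W2 * s2"
proof -
  have "c1 * (s1 / p1 * q1) + c2 * (s2 / p2 * q2) + (s1 * p2 / p1 + s2 * p1 / p2)
      = s1 / p1 * (c1 * q1 + p2) + s2 / p2 * (c2 * q2 + p1)"
    by (simp add: algebra_simps)
  also have "\<dots> \<le> s1 / p1 * (W1 * p1) + s2 / p2 * (W2 * p2)"
    using assms by (intro add_mono mult_left_mono) auto
  also have "\<dots> = W1 * s1 + W2 * s2"
    using assms by simp
  finally show ?thesis .
qed

locale kernel_pair = k1: interval_kernel J1 L1 L2 + k2: interval_kernel J2 L1 L2
  for J1 J2 :: "real \<Rightarrow> real" and L1 L2 :: real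
begin

definition positive_supersolution ::
    "real \<Rightarrow> real \<Rightarrow> real \<Rightarrow> real \<Rightarrow> (real \<Rightarrow> real) \<Rightarrow> (real \<Rightarrow> real) \<Rightarrow> bool" where
  "positive_supersolution c1 c2 W1 W2 \<phi>1 \<phi>2 \<longleftrightarrow>
     continuous_on {L1..L2} \<phi>1 \<and> continuous_on {L1..L2} \<phi>2 \<and>
     (\<forall>x\<in>{L1..L2}. 0 < \<phi>1 x \<and> 0 < \<phi>2 x \<and>
        c1 * k1.A \<phi>1 x + \<phi>2 x \<le> W1 * \<phi>1 x \<and> c2 * k2.A \<phi>2 x + \<phi>1 x \<le> W2 * \<phi>2 x)"

definition system_form :: "real \<Rightarrow> real \<Rightarrow> (real \<Rightarrow> real) \<Rightarrow> (real \<Rightarrow> real) \<Rightarrow> real" where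
  "system_form c1 c2 u1 u2 =
     c1 * integral {L1..L2} (\<lambda>x. u1 x * k1.A u1 x) + c2 * integral {L1..L2} (\<lambda>x. u2 x * k2.A u2 x)
     + 2 * integral {L1..L2} (\<lambda>x. u1 x * u2 x)"

definition weighted_norm :: "real \<Rightarrow> real \<Rightarrow> (real \<Rightarrow> real) \<Rightarrow> (real \<Rightarrow> real) \<Rightarrow> real" where
  "weighted_norm W1 W2 u1 u2 =
     W1 * integral {L1..L2} (\<lambda>x. (u1 x)\<^sup>2) + W2 * integral {L1..L2} (\<lambda>x. (u2 x)\<^sup>2)"

lemma integral_square_nonneg:
  "continuous_on {L1..L2} u \<Longrightarrow> 0 \<le> integral {L1..L2} (\<lambda>x. (u x)\<^sup>2)" for u :: "real \<Rightarrow> real"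
  by (rule integral_nonneg) (auto intro!: integrable_continuous_real continuous_intros)

lemma weighted_norm_mono:
  assumes "W1 \<le> V1" "W2 \<le> V2" "continuous_on {L1..L2} u1" "continuous_on {L1..L2} u2"
  shows "weighted_norm W1 W2 u1 u2 \<le> weighted_norm V1 V2 u1 u2"
  unfolding weighted_norm_def
  using assms integral_square_nonneg by (intro add_mono mult_right_mono) auto

lemma system_form_le_of_supersolution:
  assumes sup: "positive_supersolution c1 c2 W1 W2 \<phi>1 \<phi>2" and c: "c1 \<ge> 0" "c2 \<ge> 0"
    and u: "continuous_on {L1..L2} u1" "continuous_on {L1..L2} u2"
  shows "system_form c1 c2 u1 u2 \<le> weighted_norm W1 W2 u1 u2"
proof -
  note \<phi> = sup[unfolded positive_supersolution_def]
  have nz: "\<forall>x\<in>{L1..L2}. \<phi>1 x \<noteq> 0" "\<forall>x\<in>{L1..L2}. \<phi>2 x \<noteq> 0"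
    using \<phi> by force+
  define p1 where "p1 x = (u1 x)\<^sup>2 / \<phi>1 x * k1.A \<phi>1 x" for x
  define p2 where "p2 x = (u2 x)\<^sup>2 / \<phi>2 x * k2.A \<phi>2 x" for x
  define p3 where "p3 x = (u1 x)\<^sup>2 * \<phi>2 x / \<phi>1 x + (u2 x)\<^sup>2 * \<phi>1 x / \<phi>2 x" for x
  have cont: "continuous_on {L1..L2} p1" "continuous_on {L1..L2} p2" "continuous_on {L1..L2} p3"
    unfolding p1_def p2_def p3_def using \<phi> u nz by (intro continuous_intros; simp)+
  have "integral {L1..L2} (\<lambda>x. 2 * (u1 x * u2 x)) \<le> integral {L1..L2} p3"
    unfolding p3_def using \<phi> u nz two_mult_le_weighted_squares
    by (intro integral_le integrable_continuous_real continuous_intros) auto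
  then have "system_form c1 c2 u1 u2
      \<le> c1 * integral {L1..L2} p1 + c2 * integral {L1..L2} p2 + integral {L1..L2} p3"
    unfolding system_form_def p1_def p2_def using \<phi> u c
    by (intro add_mono mult_left_mono k1.picone_inequality k2.picone_inequality) auto
  also have "\<dots> = integral {L1..L2} (\<lambda>x. c1 * p1 x + c2 * p2 x + p3 x)"
    using cont[THEN integrable_continuous_real]
    by (simp add: integral_add integrable_add integrable_on_mult_right)
  also have "\<dots> \<le> integral {L1..L2} (\<lambda>x. W1 * (u1 x)\<^sup>2 + W2 * (u2 x)\<^sup>2)"
    using \<phi> unfolding p1_def p2_def p3_def
    by (intro integral_le weighted_supersolution_sum_le integrable_continuous_real)
      (use cont u in \<open>auto simp: p1_def p2_def p3_def intro!: continuous_intros\<close>)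
  also have "\<dots> = weighted_norm W1 W2 u1 u2"
    unfolding weighted_norm_def using u
    by (simp add: integral_add integrable_continuous_real continuous_on_power integrable_on_mult_right)
  finally show ?thesis .
qed

lemma system_form_le_increased_weights:
  assumes sup: "positive_supersolution c1' c2' W1' W2' \<phi>1 \<phi>2"
    and c: "0 \<le> c1'" "c1' \<le> c1" "0 \<le> c2'" "c2' \<le> c2"
    and r: "\<And>\<psi>. continuous_on {L1..L2} \<psi> \<Longrightarrow>
      integral {L1..L2} (\<lambda>x. \<psi> x * k1.A \<psi> x) \<le> r * integral {L1..L2} (\<lambda>x. (\<psi> x)\<^sup>2)"
    "\<And>\<psi>. continuous_on {L1..L2} \<psi> \<Longrightarrow>
      integral {L1..L2} (\<lambda>x. \<psi> x * k2.A \<psi> x) \<le> r * integral {L1..L2} (\<lambda>x. (\<psi> x)\<^sup>2)"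
    and u: "continuous_on {L1..L2} u1" "continuous_on {L1..L2} u2"
  shows "system_form c1 c2 u1 u2 \<le> weighted_norm (W1' + r * (c1 - c1')) (W2' + r * (c2 - c2')) u1 u2"
proof -
  have "(c1 - c1') * integral {L1..L2} (\<lambda>x. u1 x * k1.A u1 x)
      \<le> (c1 - c1') * (r * integral {L1..L2} (\<lambda>x. (u1 x)\<^sup>2))"
    "(c2 - c2') * integral {L1..L2} (\<lambda>x. u2 x * k2.A u2 x)
      \<le> (c2 - c2') * (r * integral {L1..L2} (\<lambda>x. (u2 x)\<^sup>2))"
    using r u c by (auto intro: mult_left_mono)
  then have "system_form c1 c2 u1 u2
      \<le> system_form c1' c2' u1 u2 + weighted_norm (r * (c1 - c1')) (r * (c2 - c2')) u1 u2"
    unfolding system_form_def weighted_norm_def by (simp add: algebra_simps)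
  also have "\<dots> \<le> weighted_norm W1' W2' u1 u2 + weighted_norm (r * (c1 - c1')) (r * (c2 - c2')) u1 u2"
    using system_form_le_of_supersolution[OF sup _ _ u] c by simp
  also have "\<dots> = weighted_norm (W1' + r * (c1 - c1')) (W2' + r * (c2 - c2')) u1 u2"
    by (simp add: weighted_norm_def algebra_simps)
  finally show ?thesis .
qed

lemma common_kernel_form_le:
  obtains r where "0 \<le> r" "r < 1"
    and "\<And>\<psi>. continuous_on {L1..L2} \<psi> \<Longrightarrow>
      integral {L1..L2} (\<lambda>x. \<psi> x * k1.A \<psi> x) \<le> r * integral {L1..L2} (\<lambda>x. (\<psi> x)\<^sup>2)"
    and "\<And>\<psi>. continuous_on {L1..L2} \<psi> \<Longrightarrow>
      integral {L1..L2} (\<lambda>x. \<psi> x * k2.A \<psi> x) \<le> r * integral {L1..L2} (\<lambda>x. (\<psi> x)\<^sup>2)"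
proof -
  obtain r1 where r1: "r1 < 1" "\<And>\<psi>. continuous_on {L1..L2} \<psi> \<Longrightarrow>
      integral {L1..L2} (\<lambda>x. \<psi> x * k1.A \<psi> x) \<le> r1 * integral {L1..L2} (\<lambda>x. (\<psi> x)\<^sup>2)"
    by (rule k1.kernel_form_le) blast
  obtain r2 where r2: "r2 < 1" "\<And>\<psi>. continuous_on {L1..L2} \<psi> \<Longrightarrow>
      integral {L1..L2} (\<lambda>x. \<psi> x * k2.A \<psi> x) \<le> r2 * integral {L1..L2} (\<lambda>x. (\<psi> x)\<^sup>2)"
    by (rule k2.kernel_form_le) blast
  define r where "r = max (max r1 r2) 0"
  show ?thesis
  proof (rule that[of r])
    show "integral {L1..L2} (\<lambda>x. \<psi> x * k1.A \<psi> x) \<le> r * integral {L1..L2} (\<lambda>x. (\<psi> x)\<^sup>2)"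
      "integral {L1..L2} (\<lambda>x. \<psi> x * k2.A \<psi> x) \<le> r * integral {L1..L2} (\<lambda>x. (\<psi> x)\<^sup>2)"
      if "continuous_on {L1..L2} \<psi>" for \<psi>
    proof -
      have "r1 * integral {L1..L2} (\<lambda>x. (\<psi> x)\<^sup>2) \<le> r * integral {L1..L2} (\<lambda>x. (\<psi> x)\<^sup>2)"
        "r2 * integral {L1..L2} (\<lambda>x. (\<psi> x)\<^sup>2) \<le> r * integral {L1..L2} (\<lambda>x. (\<psi> x)\<^sup>2)"
        using integral_square_nonneg[OF that] by (simp_all add: r_def mult_right_mono)
      then show "integral {L1..L2} (\<lambda>x. \<psi> x * k1.A \<psi> x) \<le> r * integral {L1..L2} (\<lambda>x. (\<psi> x)\<^sup>2)"
        "integral {L1..L2} (\<lambda>x. \<psi> x * k2.A \<psi> x) \<le> r * integral {L1..L2} (\<lambda>x. (\<psi> x)\<^sup>2)"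
        using r1(2)[OF that] r2(2)[OF that] by linarith+
    qed
  qed (use r1 r2 in \<open>auto simp: r_def\<close>)
qed

end

lemma polarization_bound:
  fixes k X Y Bu Bw Nu Nw :: real
  assumes "k > 0"
    and bound: "\<And>t. \<bar>Bu + 2 * t * X + t\<^sup>2 * Bw\<bar> \<le> k * (Nu + 2 * t * Y + t\<^sup>2 * Nw)"
  shows "2 * X \<le> k\<^sup>2 * Nu + Nw"
proof -
  have quad: "4 * t * X \<le> 2 * k * (Nu + t\<^sup>2 * Nw)" for t
  proof -
    have "4 * t * X = (Bu + 2 * t * X + t\<^sup>2 * Bw) + - (Bu + 2 * (- t) * X + (- t)\<^sup>2 * Bw)"
      by (simp add: algebra_simps)
    also have "\<dots> \<le> k * (Nu + 2 * t * Y + t\<^sup>2 * Nw) + k * (Nu + 2 * (- t) * Y + (- t)\<^sup>2 * Nw)"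
      by (rule add_mono[OF abs_le_D1[OF bound] abs_le_D2[OF bound]])
    also have "\<dots> = 2 * k * (Nu + t\<^sup>2 * Nw)"
      by (simp add: algebra_simps)
    finally show ?thesis .
  qed
  have "2 * X = k / 2 * (4 * (1 / k) * X)"
    using \<open>k > 0\<close> by simp
  also have "\<dots> \<le> k / 2 * (2 * k * (Nu + (1 / k)\<^sup>2 * Nw))"
    using \<open>k > 0\<close> by (intro mult_left_mono quad) auto
  also have "\<dots> = k\<^sup>2 * Nu + Nw"
    using \<open>k > 0\<close> by (simp add: power2_eq_square field_simps)
  finally show ?thesis .
qed

lemma scaled_square_le:
  fixes c y C S B :: real
  assumes "y\<^sup>2 \<le> C * S" "S \<le> B" "0 \<le> C"
  shows "(c * y)\<^sup>2 \<le> c\<^sup>2 * C * B"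
proof -
  have "(c * y)\<^sup>2 = c\<^sup>2 * y\<^sup>2"
    by (simp add: power_mult_distrib)
  also have "\<dots> \<le> c\<^sup>2 * (C * B)"
    using assms by (intro mult_left_mono order_trans[OF _ mult_left_mono[of S B C]]) auto
  finally show ?thesis
    by (simp add: mult.assoc)
qed

locale coercive_system = kernel_pair +
  fixes c1 c2 W1 W2 \<epsilon> :: real
  assumes c_nonneg: "0 \<le> c1" "0 \<le> c2" and W_pos: "0 < W1" "0 < W2" and \<epsilon>: "0 < \<epsilon>" "\<epsilon> < 1"
    and coercive: "\<And>u1 u2. continuous_on {L1..L2} u1 \<Longrightarrow> continuous_on {L1..L2} u2 \<Longrightarrow>
      system_form c1 c2 u1 u2 \<le> (1 - \<epsilon>) * weighted_norm W1 W2 u1 u2"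
begin

definition kernel_bilinear ::
    "(real \<Rightarrow> real) \<Rightarrow> (real \<Rightarrow> real) \<Rightarrow> (real \<Rightarrow> real) \<Rightarrow> (real \<Rightarrow> real) \<Rightarrow> real" where
  "kernel_bilinear u1 u2 v1 v2 =
     c1 * integral {L1..L2} (\<lambda>x. v1 x * k1.A u1 x) + c2 * integral {L1..L2} (\<lambda>x. v2 x * k2.A u2 x)"

definition energy_bilinear ::
    "(real \<Rightarrow> real) \<Rightarrow> (real \<Rightarrow> real) \<Rightarrow> (real \<Rightarrow> real) \<Rightarrow> (real \<Rightarrow> real) \<Rightarrow> real" where
  "energy_bilinear u1 u2 v1 v2 =
     integral {L1..L2} (\<lambda>x. W1 * u1 x * v1 x + W2 * u2 x * v2 x - (u1 x * v2 x + u2 x * v1 x))"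

abbreviation energy :: "(real \<Rightarrow> real) \<Rightarrow> (real \<Rightarrow> real) \<Rightarrow> real" where
  "energy u1 u2 \<equiv> energy_bilinear u1 u2 u1 u2"

lemma weighted_norm_nonneg:
  "continuous_on {L1..L2} u1 \<Longrightarrow> continuous_on {L1..L2} u2 \<Longrightarrow> 0 \<le> weighted_norm W1 W2 u1 u2"
  unfolding weighted_norm_def using W_pos integral_square_nonneg by simp

lemma energy_eq:
  assumes u: "continuous_on {L1..L2} u1" "continuous_on {L1..L2} u2"
  shows "energy u1 u2 = weighted_norm W1 W2 u1 u2 - 2 * integral {L1..L2} (\<lambda>x. u1 x * u2 x)"
proof -
  have int: "(\<lambda>x. W1 * (u1 x)\<^sup>2) integrable_on {L1..L2}" "(\<lambda>x. W2 * (u2 x)\<^sup>2) integrable_on {L1..L2}"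
    "(\<lambda>x. 2 * (u1 x * u2 x)) integrable_on {L1..L2}"
    using u by (auto intro!: integrable_continuous_real continuous_intros)
  have "energy u1 u2 = integral {L1..L2} (\<lambda>x. W1 * (u1 x)\<^sup>2 + W2 * (u2 x)\<^sup>2 - 2 * (u1 x * u2 x))"
    unfolding energy_bilinear_def by (simp add: power2_eq_square mult_2 algebra_simps)
  also have "\<dots> = weighted_norm W1 W2 u1 u2 - 2 * integral {L1..L2} (\<lambda>x. u1 x * u2 x)"
    unfolding weighted_norm_def using int by (simp add: integral_add integral_diff integrable_add)
  finally show ?thesis .
qed

lemma kernel_bilinear_abs_le:
  assumes u: "continuous_on {L1..L2} u1" "continuous_on {L1..L2} u2"
  shows "\<bar>kernel_bilinear u1 u2 u1 u2\<bar> \<le> energy u1 u2 - \<epsilon> * weighted_norm W1 W2 u1 u2"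
proof -
  let ?v1 = "\<lambda>y. \<bar>u1 y\<bar>" and ?v2 = "\<lambda>y. \<bar>u2 y\<bar>"
  have v: "continuous_on {L1..L2} ?v1" "continuous_on {L1..L2} ?v2"
    using u by (auto intro: continuous_intros)
  have "\<bar>kernel_bilinear u1 u2 u1 u2\<bar>
      \<le> c1 * \<bar>integral {L1..L2} (\<lambda>x. u1 x * k1.A u1 x)\<bar> + c2 * \<bar>integral {L1..L2} (\<lambda>x. u2 x * k2.A u2 x)\<bar>"
    unfolding kernel_bilinear_def
    by (rule order_trans[OF abs_triangle_ineq]) (use c_nonneg in \<open>simp add: abs_mult\<close>)
  also have "\<dots> \<le> kernel_bilinear ?v1 ?v2 ?v1 ?v2"
    unfolding kernel_bilinear_def using c_nonneg
    by (intro add_mono mult_left_mono k1.kernel_form_abs_le k2.kernel_form_abs_le u) auto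
  also have "\<dots> \<le> (1 - \<epsilon>) * weighted_norm W1 W2 u1 u2 - 2 * integral {L1..L2} (\<lambda>x. \<bar>u1 x\<bar> * \<bar>u2 x\<bar>)"
    using coercive[OF v] unfolding system_form_def kernel_bilinear_def weighted_norm_def by simp
  also have "integral {L1..L2} (\<lambda>x. u1 x * u2 x) \<le> integral {L1..L2} (\<lambda>x. \<bar>u1 x\<bar> * \<bar>u2 x\<bar>)"
    using u by (intro integral_le integrable_continuous_real continuous_intros)
      (auto simp flip: abs_mult)
  then have "(1 - \<epsilon>) * weighted_norm W1 W2 u1 u2 - 2 * integral {L1..L2} (\<lambda>x. \<bar>u1 x\<bar> * \<bar>u2 x\<bar>)
      \<le> energy u1 u2 - \<epsilon> * weighted_norm W1 W2 u1 u2"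
    unfolding energy_eq[OF u] by (simp add: algebra_simps)
  finally show ?thesis .
qed

lemma energy_ge:
  assumes "continuous_on {L1..L2} u1" "continuous_on {L1..L2} u2"
  shows "\<epsilon> * weighted_norm W1 W2 u1 u2 \<le> energy u1 u2"
  using kernel_bilinear_abs_le[OF assms] abs_ge_zero[of "kernel_bilinear u1 u2 u1 u2"] by linarith

lemma energy_nonneg:
  assumes "continuous_on {L1..L2} u1" "continuous_on {L1..L2} u2"
  shows "0 \<le> energy u1 u2"
proof -
  have "0 \<le> \<epsilon> * weighted_norm W1 W2 u1 u2"
    using \<epsilon> weighted_norm_nonneg[OF assms] by simp
  then show ?thesis
    using energy_ge[OF assms] by linarith
qed

lemma energy_le:
  assumes u: "continuous_on {L1..L2} u1" "continuous_on {L1..L2} u2"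
  shows "energy u1 u2 \<le> (1 + 1 / W1 + 1 / W2) * weighted_norm W1 W2 u1 u2"
proof -
  let ?S1 = "integral {L1..L2} (\<lambda>x. (u1 x)\<^sup>2)" and ?S2 = "integral {L1..L2} (\<lambda>x. (u2 x)\<^sup>2)"
  have "integral {L1..L2} (\<lambda>x. - (2 * (u1 x * u2 x))) \<le> integral {L1..L2} (\<lambda>x. (u1 x)\<^sup>2 + (u2 x)\<^sup>2)"
  proof (rule integral_le)
    show "- (2 * (u1 x * u2 x)) \<le> (u1 x)\<^sup>2 + (u2 x)\<^sup>2" for x
      using sum_squares_ge_zero[of "u1 x + u2 x" 0] by (simp add: power2_eq_square algebra_simps)
  qed (use u in \<open>auto intro!: integrable_continuous_real continuous_intros\<close>)
  then have "- 2 * integral {L1..L2} (\<lambda>x. u1 x * u2 x) \<le> ?S1 + ?S2"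
    using u by (simp add: integral_add integrable_continuous_real continuous_on_power)
  moreover have "?S1 \<le> weighted_norm W1 W2 u1 u2 / W1" "?S2 \<le> weighted_norm W1 W2 u1 u2 / W2"
    using W_pos integral_square_nonneg[OF u(1)] integral_square_nonneg[OF u(2)]
    by (simp_all add: weighted_norm_def field_simps)
  ultimately show ?thesis
    unfolding energy_eq[OF u] by (simp add: algebra_simps)
qed

definition contraction_factor :: real where
  "contraction_factor = 1 - \<epsilon> / (1 + 1 / W1 + 1 / W2)"

lemma contraction_factor: "0 < contraction_factor" "contraction_factor < 1"
proof -
  define K where "K = 1 + 1 / W1 + 1 / W2"
  have "1 \<le> K"
    using W_pos by (simp add: K_def)
  then have "0 < \<epsilon> / K" "\<epsilon> / K \<le> \<epsilon>"
    using \<epsilon> divide_left_mono[of 1 K \<epsilon>] by auto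
  then show "0 < contraction_factor" "contraction_factor < 1"
    using \<epsilon> by (auto simp: contraction_factor_def K_def)
qed

lemma kernel_bilinear_abs_le_energy:
  assumes u: "continuous_on {L1..L2} u1" "continuous_on {L1..L2} u2"
  shows "\<bar>kernel_bilinear u1 u2 u1 u2\<bar> \<le> contraction_factor * energy u1 u2"
proof -
  define K where "K = 1 + 1 / W1 + 1 / W2"
  have "0 < K"
    using W_pos by (simp add: K_def add_pos_pos)
  then have "energy u1 u2 / K \<le> weighted_norm W1 W2 u1 u2"
    using energy_le[OF u] by (simp add: K_def pos_divide_le_eq mult.commute)
  then have "\<epsilon> * (energy u1 u2 / K) \<le> \<epsilon> * weighted_norm W1 W2 u1 u2"
    using \<epsilon> by (intro mult_left_mono) auto
  moreover have "contraction_factor * energy u1 u2 = energy u1 u2 - \<epsilon> * (energy u1 u2 / K)"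
    by (simp add: contraction_factor_def K_def algebra_simps)
  ultimately show ?thesis
    using kernel_bilinear_abs_le[OF u] by linarith
qed

lemma kernel_bilinear_expand:
  assumes u: "continuous_on {L1..L2} u1" "continuous_on {L1..L2} u2"
    and w: "continuous_on {L1..L2} w1" "continuous_on {L1..L2} w2"
  shows "kernel_bilinear (\<lambda>y. u1 y + t * w1 y) (\<lambda>y. u2 y + t * w2 y) (\<lambda>y. u1 y + t * w1 y) (\<lambda>y. u2 y + t * w2 y)
    = kernel_bilinear u1 u2 u1 u2 + 2 * t * kernel_bilinear u1 u2 w1 w2 + t\<^sup>2 * kernel_bilinear w1 w2 w1 w2"
  unfolding kernel_bilinear_def k1.kernel_form_expand[OF u(1) w(1)] k2.kernel_form_expand[OF u(2) w(2)]
  by (simp add: algebra_simps)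

lemma energy_expand:
  assumes u: "continuous_on {L1..L2} u1" "continuous_on {L1..L2} u2"
    and w: "continuous_on {L1..L2} w1" "continuous_on {L1..L2} w2"
  shows "energy (\<lambda>y. u1 y + t * w1 y) (\<lambda>y. u2 y + t * w2 y)
    = energy u1 u2 + 2 * t * energy_bilinear u1 u2 w1 w2 + t\<^sup>2 * energy w1 w2"
proof -
  define e where "e a1 a2 b1 b2 x = W1 * a1 x * b1 x + W2 * a2 x * b2 x - (a1 x * b2 x + a2 x * b1 x)"
    for a1 a2 b1 b2 :: "real \<Rightarrow> real" and x
  have int: "(\<lambda>x. e u1 u2 u1 u2 x) integrable_on {L1..L2}"
    "(\<lambda>x. 2 * t * e u1 u2 w1 w2 x) integrable_on {L1..L2}" "(\<lambda>x. t\<^sup>2 * e w1 w2 w1 w2 x) integrable_on {L1..L2}"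
    unfolding e_def using u w by (auto intro!: integrable_continuous_real continuous_intros)
  have "energy (\<lambda>y. u1 y + t * w1 y) (\<lambda>y. u2 y + t * w2 y)
      = integral {L1..L2} (\<lambda>x. e u1 u2 u1 u2 x + 2 * t * e u1 u2 w1 w2 x + t\<^sup>2 * e w1 w2 w1 w2 x)"
    unfolding energy_bilinear_def e_def by (simp add: power2_eq_square algebra_simps)
  also have "\<dots> = energy u1 u2 + 2 * t * energy_bilinear u1 u2 w1 w2 + t\<^sup>2 * energy w1 w2"
    using int by (simp add: integral_add integrable_add energy_bilinear_def e_def)
  finally show ?thesis .
qed

lemma kernel_bilinear_polarization:
  assumes u: "continuous_on {L1..L2} u1" "continuous_on {L1..L2} u2"
    and w: "continuous_on {L1..L2} w1" "continuous_on {L1..L2} w2"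
  shows "2 * kernel_bilinear u1 u2 w1 w2 \<le> contraction_factor\<^sup>2 * energy u1 u2 + energy w1 w2"
proof (rule polarization_bound[OF contraction_factor(1)])
  fix t :: real
  have "continuous_on {L1..L2} (\<lambda>y. u1 y + t * w1 y)" "continuous_on {L1..L2} (\<lambda>y. u2 y + t * w2 y)"
    using u w by (auto intro!: continuous_intros)
  from kernel_bilinear_abs_le_energy[OF this]
  show "\<bar>kernel_bilinear u1 u2 u1 u2 + 2 * t * kernel_bilinear u1 u2 w1 w2 + t\<^sup>2 * kernel_bilinear w1 w2 w1 w2\<bar>
      \<le> contraction_factor * (energy u1 u2 + 2 * t * energy_bilinear u1 u2 w1 w2 + t\<^sup>2 * energy w1 w2)"
    unfolding kernel_bilinear_expand[OF u w] energy_expand[OF u w] .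
qed

definition system_det :: real where
  "system_det = W1 * W2 - 1"

lemma system_det_pos: "0 < system_det"
proof -
  have "\<epsilon> * weighted_norm W1 W2 (\<lambda>_. 1) (\<lambda>_. W1) \<le> energy (\<lambda>_. 1) (\<lambda>_. W1)"
    by (rule energy_ge) auto
  then have "\<epsilon> * ((L2 - L1) * (W1 + W2 * W1\<^sup>2)) \<le> (L2 - L1) * (W1 * system_det)"
    using k1.interval by (simp add: weighted_norm_def energy_bilinear_def system_det_def power2_eq_square
        algebra_simps)
  moreover have "0 < \<epsilon> * ((L2 - L1) * (W1 + W2 * W1\<^sup>2))"
    using \<epsilon> W_pos k1.interval by (simp add: add_pos_pos)
  ultimately have "0 < ((L2 - L1) * W1) * system_det"
    by (simp add: mult.assoc)
  moreover have "0 < (L2 - L1) * W1"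
    using W_pos k1.interval by simp
  ultimately show ?thesis
    by (rule zero_less_mult_pos)
qed

text \<open>\<open>(resolvent1 u\<^sub>1 u\<^sub>2, resolvent2 u\<^sub>1 u\<^sub>2) = M\<^sup>-\<^sup>1 (c\<^sub>1A\<^sub>1u\<^sub>1, c\<^sub>2A\<^sub>2u\<^sub>2)\<close> for
  \<open>M = [[W\<^sub>1, -1], [-1, W\<^sub>2]]\<close>, whose determinant is \<open>system_det\<close>.\<close>

definition resolvent1 :: "(real \<Rightarrow> real) \<Rightarrow> (real \<Rightarrow> real) \<Rightarrow> real \<Rightarrow> real" where
  "resolvent1 u1 u2 x = (W2 * (c1 * k1.A u1 x) + c2 * k2.A u2 x) / system_det"

definition resolvent2 :: "(real \<Rightarrow> real) \<Rightarrow> (real \<Rightarrow> real) \<Rightarrow> real \<Rightarrow> real" where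
  "resolvent2 u1 u2 x = (c1 * k1.A u1 x + W1 * (c2 * k2.A u2 x)) / system_det"

lemma resolvent_eq:
  "W1 * resolvent1 u1 u2 x - resolvent2 u1 u2 x = c1 * k1.A u1 x"
  "W2 * resolvent2 u1 u2 x - resolvent1 u1 u2 x = c2 * k2.A u2 x"
  using system_det_pos
  by (simp_all add: resolvent1_def resolvent2_def field_simps) (simp_all add: system_det_def algebra_simps)

lemma continuous_on_resolvent:
  assumes "continuous_on {L1..L2} u1" "continuous_on {L1..L2} u2"
  shows "continuous_on {L1..L2} (resolvent1 u1 u2)" "continuous_on {L1..L2} (resolvent2 u1 u2)"
  unfolding resolvent1_def[abs_def] resolvent2_def[abs_def]
  using assms system_det_pos by (auto intro!: continuous_intros)

lemma energy_resolvent: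
  assumes u: "continuous_on {L1..L2} u1" "continuous_on {L1..L2} u2"
  shows "energy (resolvent1 u1 u2) (resolvent2 u1 u2)
    = kernel_bilinear u1 u2 (resolvent1 u1 u2) (resolvent2 u1 u2)"
proof -
  let ?r1 = "resolvent1 u1 u2" and ?r2 = "resolvent2 u1 u2"
  have r: "continuous_on {L1..L2} ?r1" "continuous_on {L1..L2} ?r2"
    using continuous_on_resolvent[OF u] .
  have "W1 * ?r1 x * ?r1 x + W2 * ?r2 x * ?r2 x - (?r1 x * ?r2 x + ?r2 x * ?r1 x)
      = c1 * (?r1 x * k1.A u1 x) + c2 * (?r2 x * k2.A u2 x)" for x
  proof -
    have "W1 * ?r1 x * ?r1 x + W2 * ?r2 x * ?r2 x - (?r1 x * ?r2 x + ?r2 x * ?r1 x)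
        = ?r1 x * (W1 * ?r1 x - ?r2 x) + ?r2 x * (W2 * ?r2 x - ?r1 x)"
      by (simp add: algebra_simps)
    then show ?thesis
      unfolding resolvent_eq by (simp add: algebra_simps)
  qed
  then have "energy ?r1 ?r2
      = integral {L1..L2} (\<lambda>x. c1 * (?r1 x * k1.A u1 x) + c2 * (?r2 x * k2.A u2 x))"
    unfolding energy_bilinear_def by simp
  also have "\<dots> = kernel_bilinear u1 u2 ?r1 ?r2"
    unfolding kernel_bilinear_def using r u
    by (simp add: integral_add integrable_on_mult_right integrable_continuous_real continuous_on_mult
        k1.continuous_on_kernel_op k2.continuous_on_kernel_op)
  finally show ?thesis .
qed

lemma energy_resolvent_le:
  assumes u: "continuous_on {L1..L2} u1" "continuous_on {L1..L2} u2"
  shows "energy (resolvent1 u1 u2) (resolvent2 u1 u2) \<le> contraction_factor\<^sup>2 * energy u1 u2"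
  using kernel_bilinear_polarization[OF u continuous_on_resolvent[OF u]] energy_resolvent[OF u]
  by simp

text \<open>The terms of the Neumann series \<open>\<Sum>\<^sub>n (M\<^sup>-\<^sup>1CA)\<^sup>n M\<^sup>-\<^sup>1(1, 1)\<close>.\<close>

primrec neumann_term :: "nat \<Rightarrow> (real \<Rightarrow> real) \<times> (real \<Rightarrow> real)" where
  "neumann_term 0 = (\<lambda>_. (W2 + 1) / system_det, \<lambda>_. (W1 + 1) / system_det)"
| "neumann_term (Suc n) =
     (resolvent1 (fst (neumann_term n)) (snd (neumann_term n)),
      resolvent2 (fst (neumann_term n)) (snd (neumann_term n)))"

abbreviation U1 :: "nat \<Rightarrow> real \<Rightarrow> real" where "U1 n \<equiv> fst (neumann_term n)"
abbreviation U2 :: "nat \<Rightarrow> real \<Rightarrow> real" where "U2 n \<equiv> snd (neumann_term n)"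

lemma continuous_on_neumann_term:
  "continuous_on {L1..L2} (U1 n) \<and> continuous_on {L1..L2} (U2 n)"
  by (induction n) (auto intro: continuous_on_resolvent)

lemma neumann_term_nonneg: "0 \<le> U1 n x \<and> 0 \<le> U2 n x"
proof (induction n arbitrary: x)
  case 0
  show ?case
    using W_pos system_det_pos by simp
next
  case (Suc n)
  have "0 \<le> k1.A (U1 n) x" "0 \<le> k2.A (U2 n) x"
    using Suc continuous_on_neumann_term by (auto intro!: k1.kernel_op_nonneg k2.kernel_op_nonneg)
  then show ?case
    using c_nonneg W_pos system_det_pos by (simp add: resolvent1_def resolvent2_def)
qed

lemma energy_neumann_term:
  "energy (U1 n) (U2 n) \<le> (contraction_factor\<^sup>2) ^ n * energy (U1 0) (U2 0)"
proof (induction n)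
  case (Suc n)
  have "energy (U1 (Suc n)) (U2 (Suc n)) \<le> contraction_factor\<^sup>2 * energy (U1 n) (U2 n)"
    using continuous_on_neumann_term by (simp add: energy_resolvent_le)
  also have "\<dots> \<le> contraction_factor\<^sup>2 * ((contraction_factor\<^sup>2) ^ n * energy (U1 0) (U2 0))"
    using Suc by (intro mult_left_mono) auto
  finally show ?case
    by (simp add: mult.assoc)
qed simp

definition neumann_sum1 :: "nat \<Rightarrow> real \<Rightarrow> real" where
  "neumann_sum1 m x = (\<Sum>k<m. U1 k x)"

definition neumann_sum2 :: "nat \<Rightarrow> real \<Rightarrow> real" where
  "neumann_sum2 m x = (\<Sum>k<m. U2 k x)"

lemma continuous_on_neumann_sum:
  "continuous_on {L1..L2} (neumann_sum1 m)" "continuous_on {L1..L2} (neumann_sum2 m)"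
  unfolding neumann_sum1_def[abs_def] neumann_sum2_def[abs_def]
  using continuous_on_neumann_term by (auto intro!: continuous_on_sum)

lemma neumann_sum_residual:
  "W1 * neumann_sum1 (Suc m) x - neumann_sum2 (Suc m) x - c1 * k1.A (neumann_sum1 (Suc m)) x
     = 1 - c1 * k1.A (U1 m) x
   \<and> W2 * neumann_sum2 (Suc m) x - neumann_sum1 (Suc m) x - c2 * k2.A (neumann_sum2 (Suc m)) x
     = 1 - c2 * k2.A (U2 m) x"
proof (induction m arbitrary: x)
  case 0
  have "neumann_sum1 (Suc 0) = U1 0" "neumann_sum2 (Suc 0) = U2 0"
    by (auto simp: neumann_sum1_def neumann_sum2_def)
  moreover have "W1 * U1 0 x - U2 0 x = 1" "W2 * U2 0 x - U1 0 x = 1"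
    using system_det_pos by (simp_all add: field_simps) (simp_all add: system_det_def algebra_simps)
  ultimately show ?case
    by simp
next
  case (Suc m)
  have sum: "neumann_sum1 (Suc (Suc m)) = (\<lambda>y. neumann_sum1 (Suc m) y + U1 (Suc m) y)"
    "neumann_sum2 (Suc (Suc m)) = (\<lambda>y. neumann_sum2 (Suc m) y + U2 (Suc m) y)"
    by (auto simp: neumann_sum1_def neumann_sum2_def)
  have A: "k1.A (neumann_sum1 (Suc (Suc m))) x = k1.A (neumann_sum1 (Suc m)) x + k1.A (U1 (Suc m)) x"
    "k2.A (neumann_sum2 (Suc (Suc m))) x = k2.A (neumann_sum2 (Suc m)) x + k2.A (U2 (Suc m)) x"
    unfolding sum using continuous_on_neumann_sum continuous_on_neumann_term[of "Suc m"]
    by (auto intro!: k1.kernel_op_add k2.kernel_op_add)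
  have "W1 * U1 (Suc m) x - U2 (Suc m) x = c1 * k1.A (U1 m) x"
    "W2 * U2 (Suc m) x - U1 (Suc m) x = c2 * k2.A (U2 m) x"
    by (simp_all add: resolvent_eq)
  then show ?case
    using Suc[of x] A unfolding sum by (simp add: algebra_simps)
qed

lemma integral_square_le_energy:
  assumes u: "continuous_on {L1..L2} u1" "continuous_on {L1..L2} u2"
  shows "integral {L1..L2} (\<lambda>x. (u1 x)\<^sup>2) \<le> energy u1 u2 / (\<epsilon> * W1)"
    "integral {L1..L2} (\<lambda>x. (u2 x)\<^sup>2) \<le> energy u1 u2 / (\<epsilon> * W2)"
proof -
  have "W1 * integral {L1..L2} (\<lambda>x. (u1 x)\<^sup>2) \<le> weighted_norm W1 W2 u1 u2"
    "W2 * integral {L1..L2} (\<lambda>x. (u2 x)\<^sup>2) \<le> weighted_norm W1 W2 u1 u2"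
    using W_pos integral_square_nonneg[OF u(1)] integral_square_nonneg[OF u(2)]
    by (simp_all add: weighted_norm_def)
  then have "\<epsilon> * (W1 * integral {L1..L2} (\<lambda>x. (u1 x)\<^sup>2)) \<le> \<epsilon> * weighted_norm W1 W2 u1 u2"
    "\<epsilon> * (W2 * integral {L1..L2} (\<lambda>x. (u2 x)\<^sup>2)) \<le> \<epsilon> * weighted_norm W1 W2 u1 u2"
    using \<epsilon> by (simp_all add: mult_left_mono)
  then have "\<epsilon> * (W1 * integral {L1..L2} (\<lambda>x. (u1 x)\<^sup>2)) \<le> energy u1 u2"
    "\<epsilon> * (W2 * integral {L1..L2} (\<lambda>x. (u2 x)\<^sup>2)) \<le> energy u1 u2"
    using energy_ge[OF u] by linarith+
  then show "integral {L1..L2} (\<lambda>x. (u1 x)\<^sup>2) \<le> energy u1 u2 / (\<epsilon> * W1)"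
    "integral {L1..L2} (\<lambda>x. (u2 x)\<^sup>2) \<le> energy u1 u2 / (\<epsilon> * W2)"
    using \<epsilon> W_pos by (simp_all add: pos_le_divide_eq mult_ac)
qed

lemma residual_square_le:
  obtains C where "0 \<le> C"
    and "\<And>u1 u2 x. continuous_on {L1..L2} u1 \<Longrightarrow> continuous_on {L1..L2} u2 \<Longrightarrow>
      (c1 * k1.A u1 x)\<^sup>2 \<le> C * energy u1 u2 \<and> (c2 * k2.A u2 x)\<^sup>2 \<le> C * energy u1 u2"
proof -
  obtain C1 where "0 \<le> C1"
    and A1: "\<And>u x. continuous_on {L1..L2} u \<Longrightarrow> (k1.A u x)\<^sup>2 \<le> C1 * integral {L1..L2} (\<lambda>y. (u y)\<^sup>2)"
    using k1.kernel_op_square_le by blast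
  obtain C2 where "0 \<le> C2"
    and A2: "\<And>u x. continuous_on {L1..L2} u \<Longrightarrow> (k2.A u x)\<^sup>2 \<le> C2 * integral {L1..L2} (\<lambda>y. (u y)\<^sup>2)"
    using k2.kernel_op_square_le by blast
  define D1 where "D1 = c1\<^sup>2 * C1 / (\<epsilon> * W1)"
  define D2 where "D2 = c2\<^sup>2 * C2 / (\<epsilon> * W2)"
  have D: "0 \<le> D1" "0 \<le> D2"
    using \<open>0 \<le> C1\<close> \<open>0 \<le> C2\<close> \<epsilon> W_pos by (simp_all add: D1_def D2_def)
  show ?thesis
  proof (rule that[of "D1 + D2"])
    fix u1 u2 :: "real \<Rightarrow> real" and x :: real
    assume u: "continuous_on {L1..L2} u1" "continuous_on {L1..L2} u2"
    have "(c1 * k1.A u1 x)\<^sup>2 \<le> D1 * energy u1 u2" "(c2 * k2.A u2 x)\<^sup>2 \<le> D2 * energy u1 u2"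
      using scaled_square_le[OF A1[OF u(1)] integral_square_le_energy(1)[OF u] \<open>0 \<le> C1\<close>, of c1]
        scaled_square_le[OF A2[OF u(2)] integral_square_le_energy(2)[OF u] \<open>0 \<le> C2\<close>, of c2]
      by (simp_all add: D1_def D2_def)
    moreover have "D1 * energy u1 u2 \<le> (D1 + D2) * energy u1 u2" "D2 * energy u1 u2 \<le> (D1 + D2) * energy u1 u2"
      using D energy_nonneg[OF u] by (simp_all add: mult_right_mono)
    ultimately show "(c1 * k1.A u1 x)\<^sup>2 \<le> (D1 + D2) * energy u1 u2 \<and> (c2 * k2.A u2 x)\<^sup>2 \<le> (D1 + D2) * energy u1 u2"
      by linarith
  qed (use D in simp)
qed

lemma residual_eventually_le_1:
  obtains n where "\<And>x. c1 * k1.A (U1 n) x \<le> 1" and "\<And>x. c2 * k2.A (U2 n) x \<le> 1"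
proof -
  obtain C where "0 \<le> C"
    and C: "\<And>u1 u2 x. continuous_on {L1..L2} u1 \<Longrightarrow> continuous_on {L1..L2} u2 \<Longrightarrow>
      (c1 * k1.A u1 x)\<^sup>2 \<le> C * energy u1 u2 \<and> (c2 * k2.A u2 x)\<^sup>2 \<le> C * energy u1 u2"
    by (rule residual_square_le) blast
  define E0 where "E0 = energy (U1 0) (U2 0)"
  have "(\<lambda>n. C * E0 * (contraction_factor\<^sup>2) ^ n) \<longlonglongrightarrow> C * E0 * 0"
    using contraction_factor by (intro tendsto_mult_left LIMSEQ_power_zero) (simp add: abs_square_less_1)
  then have "eventually (\<lambda>n. C * E0 * (contraction_factor\<^sup>2) ^ n < 1) sequentially"
    by (rule order_tendstoD) simp
  then obtain n where n: "C * E0 * (contraction_factor\<^sup>2) ^ n < 1"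
    unfolding eventually_sequentially by blast
  have sq: "(c1 * k1.A (U1 n) x)\<^sup>2 < 1 \<and> (c2 * k2.A (U2 n) x)\<^sup>2 < 1" for x
  proof -
    have "C * energy (U1 n) (U2 n) \<le> C * ((contraction_factor\<^sup>2) ^ n * E0)"
      using energy_neumann_term[of n] \<open>0 \<le> C\<close> by (simp add: E0_def mult_left_mono)
    then show ?thesis
      using C[of "U1 n" "U2 n" x] continuous_on_neumann_term[of n] n by (simp add: mult_ac)
  qed
  have "c1 * k1.A (U1 n) x \<le> 1" "c2 * k2.A (U2 n) x \<le> 1" for x
    using sq[of x] by (auto simp: abs_square_less_1 abs_less_iff)
  then show ?thesis
    by (rule that)
qed

lemma positive_supersolution_exists:
  obtains \<phi>1 \<phi>2 where "positive_supersolution c1 c2 W1 W2 \<phi>1 \<phi>2"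
proof -
  obtain n where res: "\<And>x. c1 * k1.A (U1 n) x \<le> 1" "\<And>x. c2 * k2.A (U2 n) x \<le> 1"
    by (rule residual_eventually_le_1) blast
  have pos: "0 < neumann_sum1 (Suc n) x \<and> 0 < neumann_sum2 (Suc n) x" for x
  proof -
    have "\<And>k. 0 \<le> U1 (Suc k) x" "\<And>k. 0 \<le> U2 (Suc k) x"
      using neumann_term_nonneg by blast+
    then have "0 \<le> (\<Sum>k<n. U1 (Suc k) x)" "0 \<le> (\<Sum>k<n. U2 (Suc k) x)"
      by (blast intro: sum_nonneg)+
    moreover have "0 < U1 0 x" "0 < U2 0 x"
      using W_pos system_det_pos by simp_all
    ultimately show ?thesis
      unfolding neumann_sum1_def neumann_sum2_def sum.lessThan_Suc_shift by linarith
  qed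
  have "c1 * k1.A (neumann_sum1 (Suc n)) x + neumann_sum2 (Suc n) x \<le> W1 * neumann_sum1 (Suc n) x"
    "c2 * k2.A (neumann_sum2 (Suc n)) x + neumann_sum1 (Suc n) x \<le> W2 * neumann_sum2 (Suc n) x" for x
    using neumann_sum_residual[of n x] res[of x] by linarith+
  then have "positive_supersolution c1 c2 W1 W2 (neumann_sum1 (Suc n)) (neumann_sum2 (Suc n))"
    unfolding positive_supersolution_def using continuous_on_neumann_sum pos by blast
  then show ?thesis
    by (rule that)
qed

end

lemma (in kernel_pair) positive_supersolution_of_coercive:
  assumes "0 \<le> c1" "0 \<le> c2" "0 < W1" "0 < W2" "0 < \<epsilon>" "\<epsilon> < 1"
    and "\<And>u1 u2. continuous_on {L1..L2} u1 \<Longrightarrow> continuous_on {L1..L2} u2 \<Longrightarrow>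
      system_form c1 c2 u1 u2 \<le> (1 - \<epsilon>) * weighted_norm W1 W2 u1 u2"
  obtains \<phi>1 \<phi>2 where "positive_supersolution c1 c2 W1 W2 \<phi>1 \<phi>2"
proof -
  interpret coercive_system J1 J2 L1 L2 c1 c2 W1 W2 \<epsilon>
    using assms by unfold_locales auto
  show ?thesis
    using positive_supersolution_exists that by blast
qed

section \<open>The principal eigenvalue\<close>

lemma lower_root_gaps:
  fixes \<alpha> \<beta> l :: real
  assumes l: "l = (\<alpha> + \<beta> - sqrt ((\<alpha> - \<beta>)\<^sup>2 + 4)) / 2"
  shows "0 < \<alpha> - l" "0 < \<beta> - l" "(\<alpha> - l) * (\<beta> - l) = 1"
proof -
  define s where "s = sqrt ((\<alpha> - \<beta>)\<^sup>2 + 4)"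
  have "\<bar>\<alpha> - \<beta>\<bar> < s"
    unfolding s_def by (rule real_less_rsqrt) (simp add: power2_abs)
  then have s: "\<alpha> - \<beta> < s" "\<beta> - \<alpha> < s"
    by (simp_all add: abs_less_iff)
  have v: "\<alpha> - l = (\<alpha> - \<beta> + s) / 2" "\<beta> - l = (\<beta> - \<alpha> + s) / 2"
    by (simp_all add: l s_def field_simps)
  show "0 < \<alpha> - l" "0 < \<beta> - l"
    unfolding v using s by simp_all
  have "s\<^sup>2 = (\<alpha> - \<beta>)\<^sup>2 + 4"
    by (simp add: s_def)
  then show "(\<alpha> - l) * (\<beta> - l) = 1"
    unfolding v by (simp add: power2_eq_square field_simps)
qed

lemma supersolution_coefficient_shift:
  fixes c c' \<alpha> lam K \<delta> p1 p2 q :: real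
  assumes "0 < c'" "0 < p1" "0 \<le> p2" "0 \<le> q"
    and sup: "c' * q + p2 \<le> (c' + \<alpha> - lam) * p1"
    and K: "(\<alpha> - lam) / c' \<le> K" "1 \<le> K" and \<delta>: "K * \<bar>c - c'\<bar> \<le> \<delta>"
  shows "c * q + p2 \<le> (c + \<alpha> - (lam - \<delta>)) * p1"
proof -
  have "c' * (p1 + (\<alpha> - lam) / c' * p1) = (c' + \<alpha> - lam) * p1"
    using \<open>0 < c'\<close> by (simp add: field_simps)
  then have "c' * q \<le> c' * (p1 + (\<alpha> - lam) / c' * p1)"
    using sup \<open>0 \<le> p2\<close> by linarith
  then have "q - p1 \<le> (\<alpha> - lam) / c' * p1"
    using \<open>0 < c'\<close> by simp
  also have "\<dots> \<le> K * p1"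
    using K \<open>0 < p1\<close> by (intro mult_right_mono) auto
  finally have "q - p1 \<le> K * p1" .
  moreover have "p1 \<le> K * p1"
    using mult_right_mono[OF K(2), of p1] \<open>0 < p1\<close> by simp
  ultimately have "\<bar>q - p1\<bar> \<le> K * p1"
    using \<open>0 \<le> q\<close> by (simp add: abs_le_iff)
  have "(c - c') * (q - p1) \<le> \<bar>c - c'\<bar> * \<bar>q - p1\<bar>"
    by (metis abs_ge_self abs_mult)
  also have "\<dots> \<le> \<bar>c - c'\<bar> * (K * p1)"
    using \<open>\<bar>q - p1\<bar> \<le> K * p1\<close> by (intro mult_left_mono) auto
  also have "\<dots> = (K * \<bar>c - c'\<bar>) * p1"
    by simp
  also have "\<dots> \<le> \<delta> * p1"
    using \<delta> \<open>0 < p1\<close> by (intro mult_right_mono) auto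
  finally have shift: "(c - c') * (q - p1) \<le> \<delta> * p1" .
  have "c * q + p2 = (c' * q + p2) + (c - c') * (q - p1) + (c - c') * p1"
    by (simp add: algebra_simps)
  also have "\<dots> \<le> (c' + \<alpha> - lam) * p1 + \<delta> * p1 + (c - c') * p1"
    using sup shift by (intro add_mono) auto
  also have "\<dots> = (c + \<alpha> - (lam - \<delta>)) * p1"
    by (simp add: algebra_simps)
  finally show ?thesis .
qed

lemma uniform_margin:
  fixes V1 V2 W1 W2 \<kappa> :: real
  assumes "0 < \<kappa>" "0 \<le> V1" "0 \<le> V2" "V1 + \<kappa> \<le> W1" "V2 + \<kappa> \<le> W2"
  obtains \<epsilon> where "0 < \<epsilon>" "\<epsilon> < 1" "V1 \<le> (1 - \<epsilon>) * W1" "V2 \<le> (1 - \<epsilon>) * W2"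
proof -
  define \<epsilon> where "\<epsilon> = \<kappa> / (W1 + W2)"
  have W: "0 < W1" "0 < W2" "\<kappa> < W1 + W2"
    using assms by linarith+
  have "\<epsilon> * W1 \<le> \<kappa>" "\<epsilon> * W2 \<le> \<kappa>"
    using W \<open>0 < \<kappa>\<close> by (simp_all add: \<epsilon>_def field_simps)
  moreover have "0 < \<epsilon>" "\<epsilon> < 1"
    using W \<open>0 < \<kappa>\<close> by (simp_all add: \<epsilon>_def)
  ultimately show ?thesis
    using that[of \<epsilon>] assms by (simp add: algebra_simps)
qed

lemma linear_supersolution_bound:
  fixes c \<alpha> lam r \<rho> M q g h :: real
  assumes "0 \<le> c" "0 < \<alpha>" "1 \<le> g" "q \<le> \<rho> * g" "\<rho> \<le> r" "0 \<le> h" "h \<le> M"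
    and lam: "lam \<le> (1 - r) * c - M"
  shows "c * q + h \<le> (c + \<alpha> - lam) * g"
proof -
  have "c * q \<le> c * (r * g)"
    using assms by (intro mult_left_mono order_trans[OF _ mult_right_mono[of \<rho> r g]]) auto
  moreover have "h \<le> M * g"
    using assms mult_left_mono[of 1 g M] by simp
  moreover have "(c * r + M) * g \<le> (c + \<alpha> - lam) * g"
    using assms by (intro mult_right_mono) (auto simp: algebra_simps)
  ultimately show ?thesis
    by (simp add: algebra_simps)
qed

locale principal_eigenvalue_problem = kernel_pair +
  fixes a b e g0 :: real
  assumes a: "0 < a" and b: "0 < b" and e: "0 < e" and g0: "0 < g0"
begin

abbreviation lp :: "real \<Rightarrow> real \<Rightarrow> real" where
  "lp d1 d2 \<equiv> lambda_p J1 J2 a b e g0 L1 L2 d1 d2"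

definition admissible :: "real \<Rightarrow> real \<Rightarrow> real \<Rightarrow> bool" where
  "admissible d1 d2 lam \<longleftrightarrow> (\<exists>\<phi>1 \<phi>2. positive_supersolution (d1 / e) (d2 / g0)
     (d1 / e + a / e - lam) (d2 / g0 + b / g0 - lam) \<phi>1 \<phi>2)"

lemma lambda_p_eq_Sup: "lp d1 d2 = Sup {lam. admissible d1 d2 lam}"
proof -
  have "K1op J1 a e L1 L2 d1 \<phi>1 \<phi>2 x + lam * \<phi>1 x \<le> 0
      \<longleftrightarrow> d1 / e * k1.A \<phi>1 x + \<phi>2 x \<le> (d1 / e + a / e - lam) * \<phi>1 x"
    "K2op J2 b g0 L1 L2 d2 \<phi>1 \<phi>2 x + lam * \<phi>2 x \<le> 0
      \<longleftrightarrow> d2 / g0 * k2.A \<phi>2 x + \<phi>1 x \<le> (d2 / g0 + b / g0 - lam) * \<phi>2 x" for \<phi>1 \<phi>2 x lam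
    unfolding K1op_def K2op_def kernel_op_def by (auto simp: algebra_simps)
  then show ?thesis
    unfolding lambda_p_def admissible_def positive_supersolution_def by simp
qed

lemma admissible_at_point:
  assumes "admissible d1 d2 lam" "0 \<le> d1" "0 \<le> d2"
  obtains u1 u2 where "0 < u1" "0 < u2"
    "u2 \<le> (d1 / e + a / e - lam) * u1" "u1 \<le> (d2 / g0 + b / g0 - lam) * u2"
proof -
  obtain \<phi>1 \<phi>2 where \<phi>: "positive_supersolution (d1 / e) (d2 / g0)
      (d1 / e + a / e - lam) (d2 / g0 + b / g0 - lam) \<phi>1 \<phi>2"
    using assms(1) unfolding admissible_def by blast
  note \<phi> = \<phi>[unfolded positive_supersolution_def]
  have L1: "L1 \<in> {L1..L2}"
    using k1.interval by simp
  have "\<forall>y\<in>{L1..L2}. 0 \<le> \<phi>1 y \<and> 0 \<le> \<phi>2 y"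
    using \<phi> by (auto simp: less_imp_le)
  then have "0 \<le> k1.A \<phi>1 L1" "0 \<le> k2.A \<phi>2 L1"
    using \<phi> by (auto intro!: k1.kernel_op_nonneg k2.kernel_op_nonneg)
  then have "0 \<le> d1 / e * k1.A \<phi>1 L1" "0 \<le> d2 / g0 * k2.A \<phi>2 L1"
    using assms e g0 by simp_all
  then show ?thesis
    using that[of "\<phi>1 L1" "\<phi>2 L1"] \<phi> L1 by fastforce
qed

lemma admissible_weights_pos:
  assumes "admissible d1 d2 lam" "0 \<le> d1" "0 \<le> d2"
  shows "0 < d1 / e + a / e - lam" "0 < d2 / g0 + b / g0 - lam"
proof -
  obtain u1 u2 where u: "0 < u1" "0 < u2"
    "u2 \<le> (d1 / e + a / e - lam) * u1" "u1 \<le> (d2 / g0 + b / g0 - lam) * u2"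
    by (rule admissible_at_point[OF assms]) blast
  then have "0 < (d1 / e + a / e - lam) * u1" "0 < (d2 / g0 + b / g0 - lam) * u2"
    by linarith+
  then show "0 < d1 / e + a / e - lam" "0 < d2 / g0 + b / g0 - lam"
    using u(1,2) by (simp_all add: zero_less_mult_iff)
qed

text \<open>The smaller eigenvalue of \<open>[[a/e, -1], [-1, b/g0]]\<close>.\<close>

definition lambda_0 :: real where
  "lambda_0 = (a / e + b / g0 - sqrt ((a / e - b / g0)\<^sup>2 + 4)) / 2"

lemma lambda_0_gaps: "0 < a / e - lambda_0" "0 < b / g0 - lambda_0"
  "(a / e - lambda_0) * (b / g0 - lambda_0) = 1"
  using lower_root_gaps[OF lambda_0_def] by simp_all

lemma admissible_lambda_0:
  assumes "0 \<le> d1" "0 \<le> d2"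
  shows "admissible d1 d2 lambda_0"
proof -
  define v where "v = a / e - lambda_0"
  have c: "0 \<le> d1 / e" "0 \<le> d2 / g0"
    using assms e g0 by simp_all
  have "d1 / e * k1.A (\<lambda>_. 1) x + v \<le> (d1 / e + a / e - lambda_0) * 1"
    "d2 / g0 * k2.A (\<lambda>_. v) x + 1 \<le> (d2 / g0 + b / g0 - lambda_0) * v" for x
  proof -
    show "d1 / e * k1.A (\<lambda>_. 1) x + v \<le> (d1 / e + a / e - lambda_0) * 1"
      using mult_left_mono[OF k1.kernel_op_one_le c(1)] by (simp add: v_def)
    have "k2.A (\<lambda>_. v) x \<le> v"
      using k2.kernel_op_cmult[of v "\<lambda>_. 1" x] mult_left_mono[OF k2.kernel_op_one_le, of v x]
        lambda_0_gaps by (simp add: v_def)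
    then have "d2 / g0 * k2.A (\<lambda>_. v) x \<le> d2 / g0 * v"
      using c(2) by (rule mult_left_mono)
    moreover have "(d2 / g0 + b / g0 - lambda_0) * v = d2 / g0 * v + (b / g0 - lambda_0) * v"
      by (simp add: algebra_simps)
    moreover have "(b / g0 - lambda_0) * v = 1"
      using lambda_0_gaps(3) by (simp add: v_def mult.commute)
    ultimately show "d2 / g0 * k2.A (\<lambda>_. v) x + 1 \<le> (d2 / g0 + b / g0 - lambda_0) * v"
      by linarith
  qed
  moreover have "0 < v"
    using lambda_0_gaps by (simp add: v_def)
  ultimately have "positive_supersolution (d1 / e) (d2 / g0)
      (d1 / e + a / e - lambda_0) (d2 / g0 + b / g0 - lambda_0) (\<lambda>_. 1) (\<lambda>_. v)"
    unfolding positive_supersolution_def by simp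
  then show ?thesis
    unfolding admissible_def by blast
qed

lemma admissible_le:
  assumes "admissible d1 d2 lam" "0 \<le> d1" "0 \<le> d2"
  shows "lam \<le> lambda_0 + max (d1 / e) (d2 / g0)"
proof (rule ccontr)
  define W1 W2 where "W1 = d1 / e + a / e - lam" "W2 = d2 / g0 + b / g0 - lam"
  assume "\<not> ?thesis"
  then have W: "W1 < a / e - lambda_0" "W2 < b / g0 - lambda_0"
    by (auto simp: W1_W2_def)
  have W_pos: "0 < W1" "0 < W2"
    using admissible_weights_pos[OF assms] by (simp_all add: W1_W2_def)
  obtain u1 u2 where u: "0 < u1" "0 < u2" "u2 \<le> W1 * u1" "u1 \<le> W2 * u2"
    unfolding W1_W2_def by (rule admissible_at_point[OF assms]) blast
  have "u1 \<le> W2 * u2"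
    by (fact u(4))
  also have "\<dots> \<le> W2 * (W1 * u1)"
    using u(3) W_pos by (intro mult_left_mono) auto
  also have "\<dots> = (W2 * W1) * u1"
    by simp
  also have "\<dots> < ((b / g0 - lambda_0) * (a / e - lambda_0)) * u1"
    using W W_pos u(1) by (intro mult_strict_right_mono mult_strict_mono) auto
  also have "\<dots> = u1"
    using lambda_0_gaps(3) by (simp add: mult.commute)
  finally show False
    by simp
qed

lemma bdd_above_admissible: "0 \<le> d1 \<Longrightarrow> 0 \<le> d2 \<Longrightarrow> bdd_above {lam. admissible d1 d2 lam}"
  by (rule bdd_aboveI[of _ "lambda_0 + max (d1 / e) (d2 / g0)"]) (auto dest: admissible_le)

lemma admissible_le_lambda_p: "admissible d1 d2 lam \<Longrightarrow> 0 \<le> d1 \<Longrightarrow> 0 \<le> d2 \<Longrightarrow> lam \<le> lp d1 d2"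
  unfolding lambda_p_eq_Sup by (rule cSup_upper) (auto intro: bdd_above_admissible)

lemma lambda_p_bounds:
  assumes "0 \<le> d1" "0 \<le> d2"
  shows "lambda_0 \<le> lp d1 d2" "lp d1 d2 \<le> lambda_0 + max (d1 / e) (d2 / g0)"
  using admissible_le_lambda_p[OF admissible_lambda_0[OF assms] assms]
    cSup_least[of "{lam. admissible d1 d2 lam}"] admissible_lambda_0[OF assms] admissible_le[OF _ assms]
  by (auto simp: lambda_p_eq_Sup)

lemma lambda_p_approx:
  assumes "0 \<le> d1" "0 \<le> d2" "0 < \<eta>"
  obtains lam where "admissible d1 d2 lam" "lambda_0 \<le> lam" "lp d1 d2 - \<eta> < lam"
proof -
  obtain lam where lam: "admissible d1 d2 lam" "lp d1 d2 - \<eta> < lam"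
    using less_cSupE[of "lp d1 d2 - \<eta>" "{lam. admissible d1 d2 lam}"] admissible_lambda_0[OF assms(1,2)] assms(3)
    by (auto simp: lambda_p_eq_Sup)
  show ?thesis
  proof (cases "lambda_0 \<le> lam")
    case True
    then show ?thesis
      using that lam by blast
  next
    case False
    then show ?thesis
      using that[of lambda_0] lam admissible_lambda_0[OF assms(1,2)] by simp
  qed
qed

definition perturbation_constant :: "real \<Rightarrow> real \<Rightarrow> real" where
  "perturbation_constant m1 m2 =
     max 1 (max ((a / e - lambda_0) / (m1 / e)) ((b / g0 - lambda_0) / (m2 / g0)))"

lemma perturbation_constant_bound:
  assumes "0 < m" "m \<le> d" "lambda_0 \<le> lam" "0 < w" "0 \<le> \<gamma> - lambda_0"
  shows "(\<gamma> - lam) / (d / w) \<le> (\<gamma> - lambda_0) / (m / w)"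
proof -
  have "(\<gamma> - lam) / (d / w) \<le> (\<gamma> - lambda_0) / (d / w)"
    using assms by (intro divide_right_mono) auto
  also have "\<dots> \<le> (\<gamma> - lambda_0) / (m / w)"
    using assms by (intro divide_left_mono divide_right_mono mult_pos_pos) auto
  finally show ?thesis .
qed

lemma admissible_perturb:
  assumes adm: "admissible d1' d2' lam" and m: "0 < m1" "0 < m2" "m1 \<le> d1'" "m2 \<le> d2'"
    and d: "0 \<le> d1" "0 \<le> d2" and lam: "lambda_0 \<le> lam"
  shows "admissible d1 d2
    (lam - perturbation_constant m1 m2 * (\<bar>d1 / e - d1' / e\<bar> + \<bar>d2 / g0 - d2' / g0\<bar>))"
proof -
  define K where "K = perturbation_constant m1 m2"
  define \<delta> where "\<delta> = K * (\<bar>d1 / e - d1' / e\<bar> + \<bar>d2 / g0 - d2' / g0\<bar>)"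
  obtain \<phi>1 \<phi>2 where \<phi>: "positive_supersolution (d1' / e) (d2' / g0)
      (d1' / e + a / e - lam) (d2' / g0 + b / g0 - lam) \<phi>1 \<phi>2"
    using adm unfolding admissible_def by blast
  note \<phi> = \<phi>[unfolded positive_supersolution_def]
  have "(a / e - lam) / (d1' / e) \<le> (a / e - lambda_0) / (m1 / e)"
    "(b / g0 - lam) / (d2' / g0) \<le> (b / g0 - lambda_0) / (m2 / g0)"
    using perturbation_constant_bound[OF m(1,3) lam e] perturbation_constant_bound[OF m(2,4) lam g0]
      lambda_0_gaps by (simp_all add: less_imp_le)
  then have K: "1 \<le> K" "(a / e - lam) / (d1' / e) \<le> K" "(b / g0 - lam) / (d2' / g0) \<le> K"
    unfolding K_def perturbation_constant_def by (simp_all add: le_max_iff_disj)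
  have \<delta>: "K * \<bar>d1 / e - d1' / e\<bar> \<le> \<delta>" "K * \<bar>d2 / g0 - d2' / g0\<bar> \<le> \<delta>"
    using K by (auto simp: \<delta>_def distrib_left)
  have "d1 / e * k1.A \<phi>1 x + \<phi>2 x \<le> (d1 / e + a / e - (lam - \<delta>)) * \<phi>1 x \<and>
      d2 / g0 * k2.A \<phi>2 x + \<phi>1 x \<le> (d2 / g0 + b / g0 - (lam - \<delta>)) * \<phi>2 x"
    if x: "x \<in> {L1..L2}" for x
  proof -
    have A: "0 \<le> k1.A \<phi>1 x" "0 \<le> k2.A \<phi>2 x"
      using \<phi> by (auto intro!: k1.kernel_op_nonneg k2.kernel_op_nonneg simp: less_imp_le)
    have \<phi>x: "0 < \<phi>1 x" "0 < \<phi>2 x"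
      "d1' / e * k1.A \<phi>1 x + \<phi>2 x \<le> (d1' / e + a / e - lam) * \<phi>1 x"
      "d2' / g0 * k2.A \<phi>2 x + \<phi>1 x \<le> (d2' / g0 + b / g0 - lam) * \<phi>2 x"
      using \<phi> x by auto
    have c': "0 < d1' / e" "0 < d2' / g0"
      using m e g0 by auto
    show ?thesis
      using supersolution_coefficient_shift[OF c'(1) \<phi>x(1) less_imp_le[OF \<phi>x(2)] A(1) \<phi>x(3) K(2,1) \<delta>(1)]
        supersolution_coefficient_shift[OF c'(2) \<phi>x(2) less_imp_le[OF \<phi>x(1)] A(2) \<phi>x(4) K(3,1) \<delta>(2)]
      by blast
  qed
  then have "positive_supersolution (d1 / e) (d2 / g0)
      (d1 / e + a / e - (lam - \<delta>)) (d2 / g0 + b / g0 - (lam - \<delta>)) \<phi>1 \<phi>2"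
    using \<phi> unfolding positive_supersolution_def by blast
  then show ?thesis
    unfolding admissible_def K_def \<delta>_def by blast
qed

lemma lambda_p_perturb:
  assumes m: "0 < m1" "0 < m2" "m1 \<le> d1'" "m2 \<le> d2'" and d: "0 \<le> d1" "0 \<le> d2"
  shows "lp d1' d2' - perturbation_constant m1 m2 * (\<bar>d1 / e - d1' / e\<bar> + \<bar>d2 / g0 - d2' / g0\<bar>)
    \<le> lp d1 d2"
proof (rule field_le_epsilon)
  fix \<eta> :: real
  assume "0 < \<eta>"
  then obtain lam where lam: "admissible d1' d2' lam" "lambda_0 \<le> lam" "lp d1' d2' - \<eta> < lam"
    using lambda_p_approx[of d1' d2' \<eta>] m by force
  from admissible_le_lambda_p[OF admissible_perturb[OF lam(1) m d lam(2)] d]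
  show "lp d1' d2' - perturbation_constant m1 m2 * (\<bar>d1 / e - d1' / e\<bar> + \<bar>d2 / g0 - d2' / g0\<bar>)
      \<le> lp d1 d2 + \<eta>"
    using lam(3) by linarith
qed

lemma lipschitz_on_lambda_p:
  assumes "0 < m1" "0 < m2"
  shows "(perturbation_constant m1 m2 * (1 / e + 1 / g0))-lipschitz_on ({m1..} \<times> {m2..})
    (\<lambda>(d1, d2). lp d1 d2)"
proof (rule lipschitz_onI)
  define K where "K = perturbation_constant m1 m2"
  have "1 \<le> K"
    by (simp add: K_def perturbation_constant_def)
  then show "0 \<le> perturbation_constant m1 m2 * (1 / e + 1 / g0)"
    using e g0 by (simp add: K_def)
  fix p q :: "real \<times> real"
  assume "p \<in> {m1..} \<times> {m2..}" "q \<in> {m1..} \<times> {m2..}"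
  then obtain d1 d2 d1' d2' where pq: "p = (d1, d2)" "q = (d1', d2')"
    and d: "m1 \<le> d1" "m2 \<le> d2" "m1 \<le> d1'" "m2 \<le> d2'"
    by auto
  define \<Delta> where "\<Delta> = \<bar>d1 / e - d1' / e\<bar> + \<bar>d2 / g0 - d2' / g0\<bar>"
  have "lp d1' d2' - K * \<Delta> \<le> lp d1 d2" "lp d1 d2 - K * \<Delta> \<le> lp d1' d2'"
    using lambda_p_perturb[of m1 m2 d1' d2' d1 d2] lambda_p_perturb[of m1 m2 d1 d2 d1' d2'] assms d
    by (auto simp: K_def \<Delta>_def abs_minus_commute)
  then have "dist (lp d1 d2) (lp d1' d2') \<le> K * \<Delta>"
    by (simp add: dist_real_def abs_le_iff)
  also have "\<Delta> \<le> dist p q / e + dist p q / g0"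
  proof -
    have "\<bar>d1 - d1'\<bar> \<le> dist p q" "\<bar>d2 - d2'\<bar> \<le> dist p q"
      using dist_fst_le[of p q] dist_snd_le[of p q] by (simp_all add: pq dist_real_def)
    moreover have "\<bar>d1 / e - d1' / e\<bar> = \<bar>d1 - d1'\<bar> / e" "\<bar>d2 / g0 - d2' / g0\<bar> = \<bar>d2 - d2'\<bar> / g0"
      using e g0 by (simp_all add: abs_divide flip: diff_divide_distrib)
    ultimately show ?thesis
      unfolding \<Delta>_def using e g0 by (simp add: add_mono divide_right_mono)
  qed
  then have "K * \<Delta> \<le> K * (dist p q / e + dist p q / g0)"
    using \<open>1 \<le> K\<close> by (intro mult_left_mono) auto
  finally show "dist ((\<lambda>(d1, d2). lp d1 d2) p) ((\<lambda>(d1, d2). lp d1 d2) q)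
      \<le> perturbation_constant m1 m2 * (1 / e + 1 / g0) * dist p q"
    by (simp add: pq K_def algebra_simps)
qed

lemma continuous_on_lambda_p: "continuous_on ({0<..} \<times> {0<..}) (\<lambda>(d1, d2). lp d1 d2)"
proof (rule continuous_at_imp_continuous_on, safe)
  fix d1 d2 :: real
  assume d: "0 < d1" "0 < d2"
  let ?U = "{d1 / 2<..} \<times> {d2 / 2<..}"
  have "continuous_on ({d1 / 2..} \<times> {d2 / 2..}) (\<lambda>(d1, d2). lp d1 d2)"
    using lipschitz_on_lambda_p[of "d1 / 2" "d2 / 2"] d by (auto intro: lipschitz_on_continuous_on)
  then have "continuous_on ?U (\<lambda>(d1, d2). lp d1 d2)"
    by (rule continuous_on_subset) auto
  moreover have "open ?U" "(d1, d2) \<in> ?U"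
    using d by (auto intro: open_Times)
  ultimately show "isCont (\<lambda>(d1, d2). lp d1 d2) (d1, d2)"
    using continuous_on_eq_continuous_at by blast
qed

lemma tendsto_lambda_p_0:
  "((\<lambda>(d1, d2). lp d1 d2) \<longlongrightarrow> lambda_0) (at (0, 0) within {0<..} \<times> {0<..})"
proof (rule tendsto_sandwich[of "\<lambda>_. lambda_0" _ _ "\<lambda>(d1, d2). lambda_0 + max (d1 / e) (d2 / g0)"])
  have "lambda_0 \<le> lp d1 d2 \<and> lp d1 d2 \<le> lambda_0 + max (d1 / e) (d2 / g0)"
    if "(d1, d2) \<in> {0<..} \<times> {0<..}" for d1 d2
    using that lambda_p_bounds[of d1 d2] by auto
  then show "eventually (\<lambda>p. lambda_0 \<le> (\<lambda>(d1, d2). lp d1 d2) p) (at (0, 0) within {0<..} \<times> {0<..})"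
    "eventually (\<lambda>p. (\<lambda>(d1, d2). lp d1 d2) p \<le> (\<lambda>(d1, d2). lambda_0 + max (d1 / e) (d2 / g0)) p)
      (at (0, 0) within {0<..} \<times> {0<..})"
    unfolding eventually_at_filter by (auto intro!: always_eventually)
  have "((\<lambda>p. lambda_0 + max (fst p / e) (snd p / g0)) \<longlongrightarrow> lambda_0 + max (fst (0::real, 0::real) / e) (snd (0::real, 0::real) / g0))
      (at (0, 0) within {0<..} \<times> {0<..})"
    using e g0 by (intro tendsto_intros) auto
  then show "((\<lambda>(d1, d2). lambda_0 + max (d1 / e) (d2 / g0)) \<longlongrightarrow> lambda_0)
      (at (0, 0) within {0<..} \<times> {0<..})"
    by (simp add: case_prod_beta')
qed simp

lemma lambda_p_ge_linear:
  obtains r M where "r < 1"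
    and "\<And>d1 d2. 0 \<le> d1 \<Longrightarrow> 0 \<le> d2 \<Longrightarrow> (1 - r) * min (d1 / e) (d2 / g0) - M \<le> lp d1 d2"
proof -
  obtain g1 r1 M1 where g1: "continuous_on {L1..L2} g1" "r1 < 1"
    "\<And>x. x \<in> {L1..L2} \<Longrightarrow> 1 \<le> g1 x \<and> g1 x \<le> M1 \<and> k1.A g1 x \<le> r1 * g1 x"
    by (rule k1.strict_subeigenfunction) blast
  obtain g2 r2 M2 where g2: "continuous_on {L1..L2} g2" "r2 < 1"
    "\<And>x. x \<in> {L1..L2} \<Longrightarrow> 1 \<le> g2 x \<and> g2 x \<le> M2 \<and> k2.A g2 x \<le> r2 * g2 x"
    by (rule k2.strict_subeigenfunction) blast
  define r where "r = max r1 r2"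
  define M where "M = max M1 M2"
  have "r < 1"
    using g1(2) g2(2) by (simp add: r_def)
  show ?thesis
  proof (rule that[OF \<open>r < 1\<close>])
    fix d1 d2 :: real
    assume d: "0 \<le> d1" "0 \<le> d2"
    define lam where "lam = (1 - r) * min (d1 / e) (d2 / g0) - M"
    have "(1 - r) * min (d1 / e) (d2 / g0) \<le> (1 - r) * (d1 / e)"
      "(1 - r) * min (d1 / e) (d2 / g0) \<le> (1 - r) * (d2 / g0)"
      using \<open>r < 1\<close> by (intro mult_left_mono; simp)+
    then have lam: "lam \<le> (1 - r) * (d1 / e) - M" "lam \<le> (1 - r) * (d2 / g0) - M"
      unfolding lam_def by linarith+
    have "positive_supersolution (d1 / e) (d2 / g0) (d1 / e + a / e - lam) (d2 / g0 + b / g0 - lam) g1 g2"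
      unfolding positive_supersolution_def
    proof (intro conjI ballI g1(1) g2(1))
      fix x
      assume x: "x \<in> {L1..L2}"
      note G = g1(3)[OF x] g2(3)[OF x]
      show "0 < g1 x" "0 < g2 x"
        using G by auto
      show "d1 / e * k1.A g1 x + g2 x \<le> (d1 / e + a / e - lam) * g1 x"
        using G d e a lam(1) by (intro linear_supersolution_bound[where \<rho> = r1]) (auto simp: r_def M_def)
      show "d2 / g0 * k2.A g2 x + g1 x \<le> (d2 / g0 + b / g0 - lam) * g2 x"
        using G d g0 b lam(2) by (intro linear_supersolution_bound[where \<rho> = r2]) (auto simp: r_def M_def)
    qed
    then have "admissible d1 d2 lam"
      unfolding admissible_def by blast
    then show "(1 - r) * min (d1 / e) (d2 / g0) - M \<le> lp d1 d2"
      using admissible_le_lambda_p d by (simp add: lam_def)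
  qed
qed

lemma filterlim_lambda_p_at_top: "filterlim (\<lambda>(d1, d2). lp d1 d2) at_top (at_top \<times>\<^sub>F at_top)"
  unfolding filterlim_at_top
proof
  fix Z :: real
  obtain r M where "r < 1"
    and lower: "\<And>d1 d2. 0 \<le> d1 \<Longrightarrow> 0 \<le> d2 \<Longrightarrow> (1 - r) * min (d1 / e) (d2 / g0) - M \<le> lp d1 d2"
    by (rule lambda_p_ge_linear) blast
  define t where "t = max 0 ((Z + M) / (1 - r))"
  have "eventually (\<lambda>p. e * t \<le> fst p \<and> g0 * t \<le> snd p) (at_top \<times>\<^sub>F at_top)"
    by (intro eventually_prodI eventually_ge_at_top)
  then show "eventually (\<lambda>p. Z \<le> (\<lambda>(d1, d2). lp d1 d2) p) (at_top \<times>\<^sub>F at_top)"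
  proof (rule eventually_mono)
    fix p :: "real \<times> real"
    assume p: "e * t \<le> fst p \<and> g0 * t \<le> snd p"
    obtain d1 d2 where p_eq: "p = (d1, d2)"
      by (cases p)
    have "t \<le> d1 / e" "t \<le> d2 / g0"
      using p e g0 unfolding p_eq
      using e g0 by (simp_all add: pos_le_divide_eq mult.commute)
    then have d: "0 \<le> d1" "0 \<le> d2" and "t \<le> min (d1 / e) (d2 / g0)"
      using e g0 by (auto simp: t_def zero_le_divide_iff)
    then have "(1 - r) * t \<le> (1 - r) * min (d1 / e) (d2 / g0)"
      using \<open>r < 1\<close> by (intro mult_left_mono) auto
    moreover have "Z + M = (1 - r) * ((Z + M) / (1 - r))"
      using \<open>r < 1\<close> by simp
    moreover have "(1 - r) * ((Z + M) / (1 - r)) \<le> (1 - r) * t"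
      using \<open>r < 1\<close> unfolding t_def by (intro mult_left_mono) auto
    ultimately show "Z \<le> (\<lambda>(d1, d2). lp d1 d2) p"
      using lower[OF d] unfolding p_eq by simp
  qed
qed

lemma admissible_shift:
  assumes adm: "admissible d1' d2' lam" and d: "0 < d1'" "d1' \<le> d1" "0 < d2'" "d2' \<le> d2"
    and r: "0 \<le> r"
    "\<And>\<psi>. continuous_on {L1..L2} \<psi> \<Longrightarrow>
      integral {L1..L2} (\<lambda>x. \<psi> x * k1.A \<psi> x) \<le> r * integral {L1..L2} (\<lambda>x. (\<psi> x)\<^sup>2)"
    "\<And>\<psi>. continuous_on {L1..L2} \<psi> \<Longrightarrow>
      integral {L1..L2} (\<lambda>x. \<psi> x * k2.A \<psi> x) \<le> r * integral {L1..L2} (\<lambda>x. (\<psi> x)\<^sup>2)"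
    and \<kappa>: "0 < \<kappa>" "\<kappa> + \<kappa> \<le> (1 - r) * (d1 / e - d1' / e)" "\<kappa> + \<kappa> \<le> (1 - r) * (d2 / g0 - d2' / g0)"
  shows "admissible d1 d2 (lam + \<kappa>)"
proof -
  define c1 c2 c1' c2' where "c1 = d1 / e" "c2 = d2 / g0" "c1' = d1' / e" "c2' = d2' / g0"
  have c: "0 < c1'" "c1' \<le> c1" "0 < c2'" "c2' \<le> c2"
    using d e g0 by (simp_all add: c1_c2_c1'_c2'_def divide_right_mono)
  define W1' W2' where "W1' = c1' + a / e - lam" "W2' = c2' + b / g0 - lam"
  define W1 W2 where "W1 = c1 + a / e - (lam + \<kappa>)" "W2 = c2 + b / g0 - (lam + \<kappa>)"
  obtain \<phi>1 \<phi>2 where \<phi>: "positive_supersolution c1' c2' W1' W2' \<phi>1 \<phi>2"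
    using adm unfolding admissible_def W1'_W2'_def c1_c2_c1'_c2'_def by blast
  have "0 < W1'" "0 < W2'" "0 \<le> r * (c1 - c1')" "0 \<le> r * (c2 - c2')"
    using admissible_weights_pos[OF adm] d r c unfolding W1'_W2'_def c1_c2_c1'_c2'_def by auto
  then have V: "0 \<le> W1' + r * (c1 - c1')" "0 \<le> W2' + r * (c2 - c2')"
    by linarith+
  have "\<kappa> + \<kappa> \<le> (1 - r) * (c1 - c1')" "\<kappa> + \<kappa> \<le> (1 - r) * (c2 - c2')"
    using \<kappa> by (simp_all add: c1_c2_c1'_c2'_def)
  then have gap: "W1' + r * (c1 - c1') + \<kappa> \<le> W1" "W2' + r * (c2 - c2') + \<kappa> \<le> W2"
    unfolding W1'_W2'_def W1_W2_def by (simp_all add: algebra_simps)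
  then have W: "0 < W1" "0 < W2"
    using V \<open>0 < \<kappa>\<close> by linarith+
  obtain \<epsilon> where \<epsilon>: "0 < \<epsilon>" "\<epsilon> < 1"
    "W1' + r * (c1 - c1') \<le> (1 - \<epsilon>) * W1" "W2' + r * (c2 - c2') \<le> (1 - \<epsilon>) * W2"
    by (rule uniform_margin[OF \<open>0 < \<kappa>\<close> V gap]) blast
  have coercive: "system_form c1 c2 u1 u2 \<le> (1 - \<epsilon>) * weighted_norm W1 W2 u1 u2"
    if u: "continuous_on {L1..L2} u1" "continuous_on {L1..L2} u2" for u1 u2
  proof -
    have "system_form c1 c2 u1 u2 \<le> weighted_norm (W1' + r * (c1 - c1')) (W2' + r * (c2 - c2')) u1 u2"
      using c by (intro system_form_le_increased_weights[OF \<phi> _ _ _ _ r(2,3) u]) auto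
    also have "\<dots> \<le> weighted_norm ((1 - \<epsilon>) * W1) ((1 - \<epsilon>) * W2) u1 u2"
      using \<epsilon> u by (intro weighted_norm_mono) auto
    also have "\<dots> = (1 - \<epsilon>) * weighted_norm W1 W2 u1 u2"
      by (simp add: weighted_norm_def algebra_simps)
    finally show ?thesis .
  qed
  have "0 \<le> c1" "0 \<le> c2"
    using c by linarith+
  then obtain \<psi>1 \<psi>2 where "positive_supersolution c1 c2 W1 W2 \<psi>1 \<psi>2"
    by (rule positive_supersolution_of_coercive[OF _ _ W \<epsilon>(1,2) coercive]) blast
  then show ?thesis
    unfolding admissible_def W1_W2_def c1_c2_c1'_c2'_def by blast
qed

lemma admissible_increase:
  assumes d: "0 < d1'" "d1' < d1" "0 < d2'" "d2' < d2"
  obtains \<kappa> where "0 < \<kappa>" and "\<And>lam. admissible d1' d2' lam \<Longrightarrow> admissible d1 d2 (lam + \<kappa>)"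
proof -
  obtain r where r: "0 \<le> r" "r < 1"
    and r_bound: "\<And>\<psi>. continuous_on {L1..L2} \<psi> \<Longrightarrow>
      integral {L1..L2} (\<lambda>x. \<psi> x * k1.A \<psi> x) \<le> r * integral {L1..L2} (\<lambda>x. (\<psi> x)\<^sup>2)"
      "\<And>\<psi>. continuous_on {L1..L2} \<psi> \<Longrightarrow>
      integral {L1..L2} (\<lambda>x. \<psi> x * k2.A \<psi> x) \<le> r * integral {L1..L2} (\<lambda>x. (\<psi> x)\<^sup>2)"
    by (rule common_kernel_form_le) blast
  define \<delta> where "\<delta> = min (d1 / e - d1' / e) (d2 / g0 - d2' / g0)"
  have "0 < \<delta>"
    using d e g0 by (simp add: \<delta>_def divide_strict_right_mono)
  have "(1 - r) * \<delta> \<le> (1 - r) * (d1 / e - d1' / e)" "(1 - r) * \<delta> \<le> (1 - r) * (d2 / g0 - d2' / g0)"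
    using r by (intro mult_left_mono; simp add: \<delta>_def)+
  moreover have "0 < (1 - r) * \<delta> / 2"
    using r \<open>0 < \<delta>\<close> by simp
  ultimately show ?thesis
    using that[of "(1 - r) * \<delta> / 2"] admissible_shift[OF _ _ _ _ _ r(1) r_bound] d by simp
qed

lemma lambda_p_strict_mono:
  assumes "0 < d1'" "d1' < d1" "0 < d2'" "d2' < d2"
  shows "lp d1' d2' < lp d1 d2"
proof -
  obtain \<kappa> where "0 < \<kappa>" and increase: "\<And>lam. admissible d1' d2' lam \<Longrightarrow> admissible d1 d2 (lam + \<kappa>)"
    by (rule admissible_increase[OF assms]) blast
  obtain lam where lam: "admissible d1' d2' lam" "lp d1' d2' - \<kappa> / 2 < lam"
    using lambda_p_approx[of d1' d2' "\<kappa> / 2"] assms \<open>0 < \<kappa>\<close> by force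
  have "lam + \<kappa> \<le> lp d1 d2"
    using admissible_le_lambda_p[OF increase[OF lam(1)]] assms by simp
  then show ?thesis
    using lam(2) \<open>0 < \<kappa>\<close> by linarith
qed

end

theorem proposition2p13:
  fixes J1 J2 G Gd :: "real \<Rightarrow> real" and a b e L1 L2 :: real
  assumes "kernel_J J1" and "kernel_J J2"
    and "a > 0" and "b > 0" and "e > 0"
    and "cond_G1 G Gd"
    and "0 < L1" and "L1 < L2"
  defines "lp \<equiv> \<lambda>d1 d2. lambda_p J1 J2 a b e (Gd 0) L1 L2 d1 d2"
  shows "continuous_on ({0<..} \<times> {0<..}) (\<lambda>(d1, d2). lp d1 d2)
    \<and> (\<forall>d1 d2 d1' d2'. 0 < d1' \<and> 0 < d2' \<and> d1' < d1 \<and> d2' < d2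
           \<longrightarrow> lp d1 d2 > lp d1' d2')
    \<and> ((\<lambda>(d1, d2). lp d1 d2) \<longlongrightarrow>
           (a / e + b / Gd 0 - sqrt ((a / e - b / Gd 0)\<^sup>2 + 4)) / 2)
           (at (0, 0) within ({0<..} \<times> {0<..}))
    \<and> filterlim (\<lambda>(d1, d2). lp d1 d2) at_top (at_top \<times>\<^sub>F at_top)"
proof -
  have "0 < Gd 0"
    using \<open>cond_G1 G Gd\<close> unfolding cond_G1_def by simp
  then interpret P: principal_eigenvalue_problem J1 J2 L1 L2 a b e "Gd 0"
    using assms(1-5,8) by unfold_locales auto
  show ?thesis
    unfolding lp_def
    using P.continuous_on_lambda_p P.lambda_p_strict_mono P.tendsto_lambda_p_0[unfolded P.lambda_0_def]
      P.filterlim_lambda_p_at_top by blast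
qed

end
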